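(* Let $q\ge 2$ and $m\ge 1$ be fixed integers. Then, as $n\to\infty$, the number of partitions of the hypercube ${\bf Z}_q^n$ into subcubes each of dimension at least $n-m$ (the dimensions of different subcubes of a partition may differ) is asymptotically equal to $n^{\frac{q^m-1}{q-1}}$.
   Context: A $d$-dimensional subcube of ${\bf Z}_q^n$ is a subset obtained by fixing the values of some $n-d$ coordinates and letting each remaining coordinate run through all of ${\bf Z}_q$. A partition into subcubes is an (unordered) collection of subcubes such that each vector of ${\bf Z}_q^n$ lies in exactly one of them. *)

theory Defs
  imports "HOL-Library.FuncSet" "HOL-Library.Landau_Symbols"
begin

definition hcube :: "nat \<Rightarrow> nat \<Rightarrow> (nat \<Rightarrow> nat) set" where
  "hcube q n = ({..<n} \<rightarrow>\<^sub>E {..<q})"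

definition subcube_fix :: "nat \<Rightarrow> nat \<Rightarrow> nat set \<Rightarrow> (nat \<Rightarrow> nat) \<Rightarrow> (nat \<Rightarrow> nat) set" where
  "subcube_fix q n S f = {x \<in> hcube q n. \<forall>i\<in>S. x i = f i}"

definition subcube_dim_ge :: "nat \<Rightarrow> nat \<Rightarrow> nat \<Rightarrow> (nat \<Rightarrow> nat) set \<Rightarrow> bool" where
  "subcube_dim_ge q n d C \<longleftrightarrow>
     (\<exists>S f. S \<subseteq> {..<n} \<and> (\<forall>i\<in>S. f i < q) \<and> n - card S \<ge> d \<and> C = subcube_fix q n S f)"

definition subcube_partition :: "nat \<Rightarrow> nat \<Rightarrow> nat \<Rightarrow> (nat \<Rightarrow> nat) set set \<Rightarrow> bool" where
  "subcube_partition q n d P \<longleftrightarrow>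
     (\<forall>C\<in>P. subcube_dim_ge q n d C) \<and>
     (\<forall>x\<in>hcube q n. \<exists>!C\<in>P. x \<in> C)"

end

(* The key estimate is that a partition P of Z_q^n into subcubes has at least 1 + (q - 1) k
   cubes, where k is the number of coordinates fixed by some cube of P; it is proved by induction,
   slicing at such a coordinate. If all cubes have codimension at most m, counting points gives at
   most q^m cubes, so k <= N = (q^m - 1) / (q - 1); and if k = N the partition is tight, which
   forces a coordinate fixed by all cubes.
   So a partition either has a common fixed coordinate, and then consists of q partitions of
   codimension m - 1 of the slices, or fixes fewer than N coordinates, and then there are only
   O(n^(N-1)) of them. Induction on m bounds the count by (n + C)^N. Conversely, fixing a new
   coordinate and putting on its q slices tight partitions of codimension m - 1 with pairwise
   disjoint sets of fixed coordinates yields at least (n - N)^N partitions. *)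

theory Submission
  imports Defs
begin

section \<open>Subcube partitions of a grid\<close>

definition grid :: "nat \<Rightarrow> nat set \<Rightarrow> (nat \<Rightarrow> nat) set" where
  "grid q I = I \<rightarrow>\<^sub>E {..<q}"

text \<open>A subcube is encoded by the partial map that assigns their values to its fixed
  coordinates; the free coordinates are those outside its domain.\<close>

definition matches :: "(nat \<Rightarrow> nat) \<Rightarrow> (nat \<rightharpoonup> nat) \<Rightarrow> bool" where
  "matches x c \<longleftrightarrow> (\<forall>i\<in>dom c. c i = Some (x i))"

definition is_cube :: "nat \<Rightarrow> nat set \<Rightarrow> (nat \<rightharpoonup> nat) \<Rightarrow> bool" where
  "is_cube q I c \<longleftrightarrow> dom c \<subseteq> I \<and> (\<forall>i\<in>dom c. the (c i) < q)"

definition cube_points :: "nat \<Rightarrow> nat set \<Rightarrow> (nat \<rightharpoonup> nat) \<Rightarrow> (nat \<Rightarrow> nat) set" where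
  "cube_points q I c = {x \<in> grid q I. matches x c}"

definition cube_partition :: "nat \<Rightarrow> nat set \<Rightarrow> (nat \<rightharpoonup> nat) set \<Rightarrow> bool" where
  "cube_partition q I P \<longleftrightarrow> (\<forall>c\<in>P. is_cube q I c) \<and> (\<forall>x\<in>grid q I. \<exists>!c\<in>P. matches x c)"

definition fixed_coords :: "(nat \<rightharpoonup> nat) set \<Rightarrow> nat set" where
  "fixed_coords P = (\<Union>c\<in>P. dom c)"

definition slice :: "nat \<Rightarrow> nat \<Rightarrow> (nat \<rightharpoonup> nat) set \<Rightarrow> (nat \<rightharpoonup> nat) set" where
  "slice t a P = (\<lambda>c. c(t := None)) ` {c\<in>P. c t = None \<or> c t = Some a}"

lemma matches_SomeD: "matches x c \<Longrightarrow> c i = Some v \<Longrightarrow> x i = v"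
  unfolding matches_def by (metis domI option.inject)

lemma matches_upd_free: "c t = None \<Longrightarrow> matches (x(t := b)) c \<longleftrightarrow> matches x c"
  unfolding matches_def by (auto simp: domIff)

lemma matches_map_le: "matches x c \<Longrightarrow> d \<subseteq>\<^sub>m c \<Longrightarrow> matches x d"
  unfolding matches_def map_le_def by (metis domI domIff)

lemma is_cube_map_le:
  assumes "is_cube q I c" and "d \<subseteq>\<^sub>m c"
  shows "is_cube q I d"
proof -
  have dom: "dom d \<subseteq> dom c" using assms(2) by (rule map_le_implies_dom_le)
  have eq: "d i = c i" if "i \<in> dom d" for i using assms(2) that unfolding map_le_def by blast
  show ?thesis using dom eq assms(1) unfolding is_cube_def by (metis subsetD subset_trans)
qed

lemma grid_upd: "x \<in> grid q I \<Longrightarrow> t \<in> I \<Longrightarrow> b < q \<Longrightarrow> x(t := b) \<in> grid q I"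
  unfolding grid_def by (auto simp: PiE_def extensional_def)

lemma cube_has_point:
  assumes "is_cube q I c" and "0 < q"
  shows "\<exists>x\<in>grid q I. matches x c"
proof
  define x where "x = restrict (\<lambda>i. case c i of Some v \<Rightarrow> v | None \<Rightarrow> 0) I"
  show "x \<in> grid q I"
    using assms unfolding x_def grid_def is_cube_def restrict_PiE_iff
    by (auto split: option.split) (metis domI option.sel)
  show "matches x c"
    using assms unfolding x_def matches_def is_cube_def by auto
qed

lemma cube_partition_cube: "cube_partition q I P \<Longrightarrow> c \<in> P \<Longrightarrow> is_cube q I c"
  unfolding cube_partition_def by blast

lemma cube_partition_cover: "cube_partition q I P \<Longrightarrow> x \<in> grid q I \<Longrightarrow> \<exists>c\<in>P. matches x c"
  unfolding cube_partition_def by blast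

lemma cube_partition_unique:
  "cube_partition q I P \<Longrightarrow> x \<in> grid q I \<Longrightarrow> c \<in> P \<Longrightarrow> d \<in> P \<Longrightarrow> matches x c \<Longrightarrow> matches x d
    \<Longrightarrow> c = d"
  unfolding cube_partition_def by blast

lemma cube_partition_value_less: "cube_partition q I P \<Longrightarrow> c \<in> P \<Longrightarrow> c i = Some v \<Longrightarrow> v < q"
  using cube_partition_cube unfolding is_cube_def by (metis domI option.sel)

lemma fixed_coords_subset: "cube_partition q I P \<Longrightarrow> fixed_coords P \<subseteq> I"
  using cube_partition_cube unfolding fixed_coords_def is_cube_def by blast

lemma cube_partition_nonempty: "cube_partition q I P \<Longrightarrow> 0 < q \<Longrightarrow> P \<noteq> {}"
  using cube_has_point[of q I Map.empty] cube_partition_cover by (fastforce simp: is_cube_def)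

lemma cube_partition_all_values:
  assumes P: "cube_partition q I P" and c: "c \<in> P" "t \<in> dom c" and b: "b < q"
  shows "\<exists>d\<in>P. d t = Some b"
proof -
  have cube: "is_cube q I c" using P c(1) by (rule cube_partition_cube)
  then have t: "t \<in> I" using c(2) unfolding is_cube_def by auto
  obtain x where x: "x \<in> grid q I" "matches x c" using cube_has_point[OF cube] b by auto
  have x': "x(t := b) \<in> grid q I" using grid_upd[OF x(1) t b] .
  obtain d where d: "d \<in> P" "matches (x(t := b)) d" using cube_partition_cover[OF P x'] by blast
  show ?thesis
  proof (cases "d t")
    case None
    then have "d = c"
      using cube_partition_unique[OF P x(1) d(1) c(1)] x(2) d(2) matches_upd_free by blast
    with None c(2) show ?thesis by auto
  next
    case (Some w)
    then show ?thesis using matches_SomeD[OF d(2) Some] d(1) by auto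
  qed
qed

lemma cube_partition_free_coord_notin:
  assumes P: "cube_partition q I P" and c: "c \<in> P" "t \<in> dom c" and q: "0 < q"
  shows "c(t := None) \<notin> P"
proof
  assume d: "c(t := None) \<in> P"
  obtain x where x: "x \<in> grid q I" "matches x c"
    using cube_has_point[OF cube_partition_cube[OF P c(1)] q] by blast
  have "matches x (c(t := None))" using matches_map_le[OF x(2)] unfolding map_le_def by auto
  then have "c(t := None) = c" using cube_partition_unique[OF P x(1) d c(1)] x(2) by blast
  with c(2) show False by (metis domIff fun_upd_same)
qed

lemma cube_partition_slice:
  assumes P: "cube_partition q I P" and t: "t \<in> I" and a: "a < q"
  shows "cube_partition q (I - {t}) (slice t a P)"
  unfolding cube_partition_def
proof (intro conjI ballI)
  fix c assume "c \<in> slice t a P"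
  then obtain c0 where "c0 \<in> P" "c = c0(t := None)" unfolding slice_def by auto
  then show "is_cube q (I - {t}) c" using cube_partition_cube[OF P] unfolding is_cube_def by auto
next
  fix x assume x: "x \<in> grid q (I - {t})"
  have x': "x(t := a) \<in> grid q I"
    using x a t unfolding grid_def by (auto simp: PiE_def extensional_def)
  have matches_iff: "matches x (c(t := None)) \<longleftrightarrow> matches (x(t := a)) c"
    if "c t = None \<or> c t = Some a" for c
    using that unfolding matches_def by (auto split: if_splits)
  obtain c where c: "c \<in> P" "matches (x(t := a)) c" using cube_partition_cover[OF P x'] by blast
  have ct: "c t = None \<or> c t = Some a"
    using matches_SomeD[OF c(2), of t] by (cases "c t") auto
  show "\<exists>!d\<in>slice t a P. matches x d"
  proof (rule ex1I[of _ "c(t := None)"])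
    show "c(t := None) \<in> slice t a P \<and> matches x (c(t := None))"
      using c ct matches_iff unfolding slice_def by auto
  next
    fix d assume "d \<in> slice t a P \<and> matches x d"
    then obtain d0 where d0: "d0 \<in> P" "d0 t = None \<or> d0 t = Some a" "d = d0(t := None)"
      and "matches x d" unfolding slice_def by auto
    then have "matches (x(t := a)) d0" using matches_iff by blast
    then have "d0 = c" using cube_partition_unique[OF P x' d0(1) c(1)] c(2) by blast
    then show "d = c(t := None)" using d0(3) by simp
  qed
qed

lemma map_le_if_cube_points_subset:
  assumes c: "is_cube q I c" and d: "is_cube q I d" and q: "2 \<le> q"
    and sub: "\<And>x. x \<in> grid q I \<Longrightarrow> matches x c \<Longrightarrow> matches x d"
  shows "d \<subseteq>\<^sub>m c"
  unfolding map_le_def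
proof
  fix i assume i: "i \<in> dom d"
  then obtain v where v: "d i = Some v" by auto
  have iI: "i \<in> I" using d i unfolding is_cube_def by auto
  obtain x where x: "x \<in> grid q I" "matches x c" using cube_has_point[OF c] q by auto
  show "d i = c i"
  proof (cases "c i")
    case None
    define b where "b = (if v = 0 then 1 else 0 :: nat)"
    have b: "b < q" "b \<noteq> v" using q unfolding b_def by auto
    have "matches (x(i := b)) d"
      using sub grid_upd[OF x(1) iI b(1)] matches_upd_free[where c = c, OF None] x(2) by blast
    then have "(x(i := b)) i = v" using v by (rule matches_SomeD)
    with b(2) show ?thesis by simp
  next
    case (Some w)
    then show ?thesis using sub[OF x] matches_SomeD v by (metis x(2))
  qed
qed

definition cubes :: "nat \<Rightarrow> nat set \<Rightarrow> (nat \<rightharpoonup> nat) set" where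
  "cubes q I = {c. is_cube q I c}"

lemma inj_on_restrict_cubes: "inj_on (\<lambda>c. restrict c I) (cubes q I)"
proof (rule inj_onI)
  fix c d assume "c \<in> cubes q I" "d \<in> cubes q I" and eq: "restrict c I = restrict d I"
  then have "dom c \<subseteq> I" "dom d \<subseteq> I" unfolding cubes_def is_cube_def by auto
  then show "c = d" using eq by (metis domIff ext restrict_apply' subsetD)
qed

lemma restrict_cubes_subset:
  "(\<lambda>c. restrict c I) ` cubes q I \<subseteq> I \<rightarrow>\<^sub>E insert None (Some ` {..<q})"
  unfolding cubes_def is_cube_def restrict_PiE_iff by (force simp: image_subset_iff)

lemma finite_cubes: "finite I \<Longrightarrow> finite (cubes q I)"
  using inj_on_finite[OF inj_on_restrict_cubes restrict_cubes_subset] by (simp add: finite_PiE)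

lemma card_cubes_le: "finite I \<Longrightarrow> card (cubes q I) \<le> (q + 1) ^ card I"
proof -
  assume "finite I"
  moreover have "card (insert None (Some ` {..<q})) = q + 1" by (simp add: card_image)
  ultimately show ?thesis
    using card_inj_on_le[OF inj_on_restrict_cubes[of I q] restrict_cubes_subset[of I q]]
    by (simp add: finite_PiE card_PiE)
qed

lemma cube_partition_subset_cubes: "cube_partition q I P \<Longrightarrow> P \<subseteq> cubes q I"
  unfolding cube_partition_def cubes_def by auto

lemma finite_cube_partition: "finite I \<Longrightarrow> cube_partition q I P \<Longrightarrow> finite P"
  using cube_partition_subset_cubes finite_cubes finite_subset by metis


section \<open>A lower bound for the number of cubes\<close>

lemma card_UN_plus_common_le_sum:
  fixes Y :: "nat \<Rightarrow> 'a set"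
  assumes fin: "\<And>a. a < q \<Longrightarrow> finite (Y a)" and common: "\<And>a. a < q \<Longrightarrow> Z \<subseteq> Y a"
    and q: "0 < q"
  shows "card (\<Union>a<q. Y a) + (q - 1) * card Z \<le> (\<Sum>a<q. card (Y a))"
proof -
  have fZ: "finite Z" using fin common q by (meson finite_subset)
  have "(\<Sum>a<q. card (Y a)) = (\<Sum>a<q. card Z + card (Y a - Z))"
    by (rule sum.cong) (auto simp: card_Diff_subset fin common card_mono fZ)
  also have "\<dots> = q * card Z + (\<Sum>a<q. card (Y a - Z))" by (simp add: sum.distrib)
  finally have sum_eq: "(\<Sum>a<q. card (Y a)) = q * card Z + (\<Sum>a<q. card (Y a - Z))" .
  have "card (\<Union>a<q. Y a) \<le> card (Z \<union> (\<Union>a<q. Y a - Z))"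
    using fZ fin by (intro card_mono) auto
  also have "\<dots> \<le> card Z + (\<Sum>a<q. card (Y a - Z))"
    using card_Un_le card_UN_le[of "{..<q}" "\<lambda>a. Y a - Z"] by (meson add_left_mono finite_lessThan le_trans)
  finally show ?thesis using sum_eq q by (cases q) auto
qed

lemma disjoint_if_card_UN_eq_sum:
  fixes X :: "nat \<Rightarrow> 'a set"
  assumes fin: "\<And>a. a < q \<Longrightarrow> finite (X a)" and eq: "(\<Sum>a<q. card (X a)) \<le> card (\<Union>a<q. X a)"
    and a: "a < q" and b: "b < q" and ab: "a \<noteq> b"
  shows "X a \<inter> X b = {}"
proof (rule ccontr)
  assume "X a \<inter> X b \<noteq> {}"
  then obtain x where x: "x \<in> X a" "x \<in> X b" by auto
  define X' where "X' c = (if c = b then X b - {x} else X c)" for c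
  have "(\<Union>c<q. X' c) = (\<Union>c<q. X c)" using x a ab unfolding X'_def by auto
  moreover have "card (\<Union>c<q. X' c) \<le> (\<Sum>c<q. card (X' c))" by (rule card_UN_le) simp
  moreover have "(\<Sum>c<q. card (X' c)) < (\<Sum>c<q. card (X c))"
  proof (rule sum_strict_mono_ex1)
    show "\<forall>c\<in>{..<q}. card (X' c) \<le> card (X c)" unfolding X'_def using fin by (auto intro: card_mono)
    show "\<exists>c\<in>{..<q}. card (X' c) < card (X c)"
    proof
      show "card (X' b) < card (X b)" using card_Diff1_less[OF fin[OF b] x(2)] unfolding X'_def by simp
    qed (use b in simp)
  qed simp
  ultimately show False using eq by (metis leD le_trans)
qed

text \<open>The arithmetic of the induction step of \<open>card_cube_partition_ge\<close> below: \<open>g\<close> counts the cubes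
  leaving the pivot coordinate \<open>t\<close> free and \<open>b a\<close> those fixing it to \<open>a\<close>; the bounds on \<open>X a\<close> and
  \<open>Y a\<close> come from the induction hypothesis applied to two readings of the slice \<open>t = a\<close>.\<close>

locale slice_counts =
  fixes q g :: nat and b :: "nat \<Rightarrow> nat" and X Y :: "nat \<Rightarrow> 'a set" and Z D :: "'a set" and t :: 'a
  assumes two_le_q: "2 \<le> q"
    and block_bound: "\<And>a. a < q \<Longrightarrow> 1 + (q - 1) * card (X a) \<le> b a"
    and free_block_bound: "\<And>a. a < q \<Longrightarrow> 1 + (q - 1) * card (Y a) \<le> g + b a"
    and D_via_X: "D = insert t (Z \<union> (\<Union>a<q. X a))"
    and D_via_Y: "D = insert t (\<Union>a<q. Y a)"
    and Z_subset_Y: "\<And>a. a < q \<Longrightarrow> Z \<subseteq> Y a"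
    and finite_Z: "finite Z" and finite_X: "\<And>a. a < q \<Longrightarrow> finite (X a)"
    and finite_Y: "\<And>a. a < q \<Longrightarrow> finite (Y a)"
begin

lemma card_D_le_X: "card D \<le> 1 + card Z + card (\<Union>a<q. X a)"
proof -
  have "card D \<le> 1 + card (Z \<union> (\<Union>a<q. X a))"
    unfolding D_via_X using finite_Z finite_X by (simp add: card_insert_if)
  then show ?thesis using card_Un_le[of Z "\<Union>a<q. X a"] by linarith
qed

lemma card_D_le_Y: "card D \<le> 1 + card (\<Union>a<q. Y a)"
  unfolding D_via_Y using finite_Y by (simp add: card_insert_if)

lemma sum_block_bound: "q + (q - 1) * (\<Sum>a<q. card (X a)) \<le> (\<Sum>a<q. b a)"
proof -
  have "(\<Sum>a<q. 1 + (q - 1) * card (X a)) \<le> (\<Sum>a<q. b a)"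
    using block_bound by (intro sum_mono) auto
  then show ?thesis unfolding sum.distrib sum_distrib_left by simp
qed

lemma sum_free_block_bound: "q + (q - 1) * (\<Sum>a<q. card (Y a)) \<le> q * g + (\<Sum>a<q. b a)"
proof -
  have "(\<Sum>a<q. 1 + (q - 1) * card (Y a)) \<le> (\<Sum>a<q. g + b a)"
    using free_block_bound by (intro sum_mono) auto
  then show ?thesis unfolding sum.distrib sum_distrib_left by simp
qed

lemma bound_via_X:
  "(q - 1) * card D \<le> (q - 1) + (q - 1) * card Z + (q - 1) * card (\<Union>a<q. X a)"
  "(q - 1) * card (\<Union>a<q. X a) \<le> (q - 1) * (\<Sum>a<q. card (X a))"
proof -
  show "(q - 1) * card D \<le> (q - 1) + (q - 1) * card Z + (q - 1) * card (\<Union>a<q. X a)"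
    using mult_le_mono2[OF card_D_le_X, of "q - 1"] by (simp only: add_mult_distrib2 mult_1_right)
  have "card (\<Union>a<q. X a) \<le> (\<Sum>a<q. card (X a))" by (rule card_UN_le) simp
  then show "(q - 1) * card (\<Union>a<q. X a) \<le> (q - 1) * (\<Sum>a<q. card (X a))" by simp
qed

lemma bound_via_Y:
  "(q - 1) * card D + (q - 1) * ((q - 1) * card Z) \<le> (q - 1) + (q - 1) * (\<Sum>a<q. card (Y a))"
proof -
  have "card (\<Union>a<q. Y a) + (q - 1) * card Z \<le> (\<Sum>a<q. card (Y a))"
    using finite_Y Z_subset_Y two_le_q by (intro card_UN_plus_common_le_sum) auto
  with card_D_le_Y have "card D + (q - 1) * card Z \<le> 1 + (\<Sum>a<q. card (Y a))" by linarith
  from mult_le_mono2[OF this, of "q - 1"] show ?thesis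
    by (simp only: add_mult_distrib2 mult_1_right)
qed

theorem count_bound: "1 + (q - 1) * card D \<le> g + (\<Sum>a<q. b a)"
proof -
  define r where "r = q - 1"
  have r: "q - 1 = r" "q = r + 1" using two_le_q by (auto simp: r_def)
  note X = bound_via_X[unfolded r(1)] and Y = bound_via_Y[unfolded r(1)]
  have SX: "q + r * (\<Sum>a<q. card (X a)) \<le> (\<Sum>a<q. b a)" using sum_block_bound r by simp
  have SY: "q + r * (\<Sum>a<q. card (Y a)) \<le> r * g + g + (\<Sum>a<q. b a)"
    using sum_free_block_bound r by (simp add: algebra_simps)
  show ?thesis
  proof (cases "r * card Z \<le> g")
    case True
    then show ?thesis unfolding r(1) using X SX r(2) by linarith
  next
    case False
    then have "r * g \<le> r * (r * card Z)" by simp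
    then show ?thesis unfolding r(1) using Y SY r(2) by linarith
  qed
qed

context
  assumes tight: "1 + (q - 1) * card D = g + (\<Sum>a<q. b a)"
begin

lemma tight_sums:
  "(\<Sum>a<q. card (X a)) \<le> card (\<Union>a<q. X a)"
  "(\<Sum>a<q. b a) \<le> q + (q - 1) * (\<Sum>a<q. card (X a))"
proof -
  define r where "r = q - 1"
  have r: "q - 1 = r" "q = r + 1" using two_le_q by (auto simp: r_def)
  note X = bound_via_X[unfolded r(1)] and Y = bound_via_Y[unfolded r(1)]
  have SX: "q + r * (\<Sum>a<q. card (X a)) \<le> (\<Sum>a<q. b a)" using sum_block_bound r by simp
  have SY: "q + r * (\<Sum>a<q. card (Y a)) \<le> r * g + g + (\<Sum>a<q. b a)"
    using sum_free_block_bound r by (simp add: algebra_simps)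
  have tight': "1 + r * card D = g + (\<Sum>a<q. b a)" using tight r by simp
  have "r * (r * card Z) \<le> r * g" using Y SY tight' r(2) by linarith
  then have gZ: "r * card Z \<le> g" using r two_le_q by simp
  have "r * (\<Sum>a<q. card (X a)) \<le> r * card (\<Union>a<q. X a)"
    using X SX gZ tight' r(2) by linarith
  then show "(\<Sum>a<q. card (X a)) \<le> card (\<Union>a<q. X a)" using r two_le_q by simp
  show "(\<Sum>a<q. b a) \<le> q + (q - 1) * (\<Sum>a<q. card (X a))"
    unfolding r(1) using X gZ tight' r(2) by linarith
qed

lemma tight_block: "a < q \<Longrightarrow> b a = 1 + (q - 1) * card (X a)"
  using sum_mono_inv[of "\<lambda>a. 1 + (q - 1) * card (X a)" "{..<q}" b a] block_bound tight_sums(2)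
    sum_block_bound
  unfolding sum.distrib sum_distrib_left by simp

lemma tight_disjoint: "a < q \<Longrightarrow> a' < q \<Longrightarrow> a \<noteq> a' \<Longrightarrow> X a \<inter> X a' = {}"
  using disjoint_if_card_UN_eq_sum[OF finite_X tight_sums(1)] by blast

end

end


lemma fixed_coords_empty [simp]: "fixed_coords {} = {}"
  unfolding fixed_coords_def by simp

lemma fixed_coords_Un [simp]: "fixed_coords (A \<union> B) = fixed_coords A \<union> fixed_coords B"
  unfolding fixed_coords_def by auto

text \<open>Slicing \<open>F \<union> Q\<close> at a coordinate \<open>t\<close> fixed by \<open>Q\<close> but not by \<open>F\<close>: each slice consists of \<open>F\<close>,
  the cubes of \<open>Q\<close> leaving \<open>t\<close> free, and one block of cubes of \<open>Q\<close> with \<open>t\<close> removed.\<close>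

locale pivot =
  fixes q :: nat and I :: "nat set" and F Q :: "(nat \<rightharpoonup> nat) set" and t :: nat
  assumes two_le_q: "2 \<le> q" and finite_I: "finite I"
    and partition: "cube_partition q I (F \<union> Q)" and disjoint: "F \<inter> Q = {}"
    and t_fixed: "t \<in> fixed_coords Q" and t_free: "t \<notin> fixed_coords F"
begin

definition free :: "(nat \<rightharpoonup> nat) set" where
  "free = {c\<in>Q. c t = None}"

definition block :: "nat \<Rightarrow> (nat \<rightharpoonup> nat) set" where
  "block a = {c\<in>Q. c t = Some a}"

definition sliced_block :: "nat \<Rightarrow> (nat \<rightharpoonup> nat) set" where
  "sliced_block a = (\<lambda>c. c(t := None)) ` block a"

definition free_coords :: "nat set" where
  "free_coords = fixed_coords free - fixed_coords F"

definition block_coords :: "nat \<Rightarrow> nat set" where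
  "block_coords a = fixed_coords (sliced_block a) - fixed_coords (F \<union> free)"

definition slice_coords :: "nat \<Rightarrow> nat set" where
  "slice_coords a = fixed_coords (free \<union> sliced_block a) - fixed_coords F"

lemma t_in_I: "t \<in> I"
  using fixed_coords_subset[OF partition] t_fixed by auto

lemma F_free: "c \<in> F \<Longrightarrow> c t = None"
  using t_free unfolding fixed_coords_def by auto

lemma finite_Q: "finite Q"
  using finite_cube_partition[OF finite_I partition] by simp

lemma finite_block: "finite (block a)"
  using finite_Q unfolding block_def by simp

lemma Q_split: "Q = free \<union> (\<Union>a<q. block a)"
proof
  show "Q \<subseteq> free \<union> (\<Union>a<q. block a)"
  proof
    fix c assume c: "c \<in> Q"
    show "c \<in> free \<union> (\<Union>a<q. block a)"
    proof (cases "c t")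
      case None
      then show ?thesis using c unfolding free_def by simp
    next
      case (Some v)
      then have "v < q" using cube_partition_value_less[OF partition] c by blast
      then show ?thesis using Some c unfolding block_def by blast
    qed
  qed
qed (auto simp: free_def block_def)

lemma card_Q: "card Q = card free + (\<Sum>a<q. card (block a))"
proof -
  have "card Q = card (free \<union> (\<Union>a<q. block a))" by (rule arg_cong[OF Q_split])
  also have "\<dots> = card free + card (\<Union>a<q. block a)"
    using finite_Q finite_block by (intro card_Un_disjoint) (auto simp: free_def block_def)
  also have "card (\<Union>a<q. block a) = (\<Sum>a<q. card (block a))"
    using finite_block by (intro card_UN_disjoint) (auto simp: block_def)
  finally show ?thesis .
qed

lemma block_nonempty: "a < q \<Longrightarrow> block a \<noteq> {}"
proof -
  assume a: "a < q"
  obtain c where "c \<in> Q" "t \<in> dom c" using t_fixed unfolding fixed_coords_def by auto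
  then obtain d where d: "d \<in> F \<union> Q" "d t = Some a"
    using cube_partition_all_values[OF partition _ _ a, of c] by blast
  then have "d \<in> Q" using F_free by fastforce
  with d(2) show ?thesis unfolding block_def by blast
qed

lemma card_sliced_block: "card (sliced_block a) = card (block a)"
  unfolding sliced_block_def
proof (rule card_image, rule inj_onI)
  fix c d assume c: "c \<in> block a" and d: "d \<in> block a" and eq: "c(t := None) = d(t := None)"
  show "c = d"
  proof
    fix i
    show "c i = d i" using c d fun_cong[OF eq, of i] unfolding block_def by (cases "i = t") auto
  qed
qed

lemma card_free_block_less: "a < q \<Longrightarrow> card free + card (block a) < card Q"
proof -
  assume a: "a < q"
  define a' where "a' = (if a = 0 then 1 else 0 :: nat)"
  have a': "a' < q" "a' \<noteq> a" using a two_le_q unfolding a'_def by auto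
  have "card (block a) + card (block a') = (\<Sum>x\<in>{a, a'}. card (block x))" using a' by simp
  also have "\<dots> \<le> (\<Sum>x<q. card (block x))" using a a' by (intro sum_mono2) auto
  moreover have "0 < card (block a')"
    using block_nonempty[OF a'(1)] finite_block[of a'] by (simp add: card_gt_0_iff)
  ultimately show ?thesis using card_Q by linarith
qed

lemma slice_eq: "slice t a (F \<union> Q) = F \<union> free \<union> sliced_block a"
proof -
  have "{c \<in> F \<union> Q. c t = None \<or> c t = Some a} = (F \<union> free) \<union> block a"
    using F_free unfolding free_def block_def by auto
  moreover have "(\<lambda>c. c(t := None)) ` (F \<union> free) = F \<union> free"
  proof -
    have "c(t := None) = c" if "c \<in> F \<union> free" for c
      using that F_free unfolding free_def by (auto simp: fun_upd_idem)
    then show ?thesis by force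
  qed
  ultimately show ?thesis unfolding slice_def sliced_block_def by (simp add: image_Un)
qed

lemma sliced_block_disjoint: "(F \<union> free) \<inter> sliced_block a = {}"
proof -
  have "c(t := None) \<notin> F \<union> free" if "c \<in> block a" for c
    using that cube_partition_free_coord_notin[OF partition, of c t] two_le_q
    unfolding block_def free_def by auto
  then show ?thesis unfolding sliced_block_def by blast
qed

lemma slice_partition: "a < q \<Longrightarrow> cube_partition q (I - {t}) (F \<union> free \<union> sliced_block a)"
  using cube_partition_slice[OF partition t_in_I] slice_eq by metis

lemma fixed_coords_sliced_block: "fixed_coords (sliced_block a) = fixed_coords (block a) - {t}"
  unfolding sliced_block_def fixed_coords_def by auto

lemma coords_via_blocks:
  "fixed_coords Q - fixed_coords F = insert t (free_coords \<union> (\<Union>a<q. block_coords a))"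
  and coords_via_slices: "fixed_coords Q - fixed_coords F = insert t (\<Union>a<q. slice_coords a)"
proof -
  have Q: "fixed_coords Q = fixed_coords free \<union> (\<Union>a<q. fixed_coords (block a))"
    by (subst (1) Q_split) (auto simp: fixed_coords_def)
  have t_block: "t \<in> fixed_coords (block a)" if "a < q" for a
    using block_nonempty[OF that] unfolding block_def fixed_coords_def by fastforce
  have q: "0 < q" using two_le_q by simp
  show "fixed_coords Q - fixed_coords F = insert t (free_coords \<union> (\<Union>a<q. block_coords a))"
    unfolding Q free_coords_def block_coords_def fixed_coords_sliced_block fixed_coords_Un
    using t_block t_free q by blast
  show "fixed_coords Q - fixed_coords F = insert t (\<Union>a<q. slice_coords a)"
    unfolding Q slice_coords_def fixed_coords_sliced_block fixed_coords_Un
    using t_block t_free q by blast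
qed

lemma free_coords_subset: "free_coords \<subseteq> slice_coords a"
  unfolding free_coords_def slice_coords_def by auto

lemma finite_coords: "finite free_coords" "finite (block_coords a)" "finite (slice_coords a)"
proof -
  have "finite (fixed_coords Q)"
    using fixed_coords_subset[OF partition] finite_I by (auto intro: finite_subset)
  moreover have "free_coords \<subseteq> fixed_coords Q" "block_coords a \<subseteq> fixed_coords Q"
    "slice_coords a \<subseteq> fixed_coords Q"
    unfolding free_coords_def block_coords_def slice_coords_def fixed_coords_Un fixed_coords_sliced_block
    by (auto simp: free_def block_def fixed_coords_def)
  ultimately show "finite free_coords" "finite (block_coords a)" "finite (slice_coords a)"
    using finite_subset by blast+
qed

context
  \<comment> \<open>the induction hypothesis of \<open>card_cube_partition_ge\<close>, for the slices\<close>
  assumes bound: "\<And>F' Q'. card Q' < card Q \<Longrightarrow> cube_partition q (I - {t}) (F' \<union> Q') \<Longrightarrow>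
      F' \<inter> Q' = {} \<Longrightarrow> Q' \<noteq> {} \<Longrightarrow> 1 + (q - 1) * card (fixed_coords Q' - fixed_coords F') \<le> card Q'"
begin

lemma block_bound: "a < q \<Longrightarrow> 1 + (q - 1) * card (block_coords a) \<le> card (block a)"
proof -
  assume a: "a < q"
  have "card (sliced_block a) < card Q" using card_free_block_less[OF a] card_sliced_block by simp
  moreover have "sliced_block a \<noteq> {}" using block_nonempty[OF a] unfolding sliced_block_def by simp
  ultimately show ?thesis
    using bound[of "sliced_block a" "F \<union> free"] slice_partition[OF a] sliced_block_disjoint
    unfolding block_coords_def by (simp add: card_sliced_block)
qed

lemma free_block_bound: "a < q \<Longrightarrow> 1 + (q - 1) * card (slice_coords a) \<le> card free + card (block a)"
proof -
  assume a: "a < q"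
  have "card (free \<union> sliced_block a) \<le> card free + card (block a)"
    using card_Un_le card_sliced_block by metis
  moreover have "F \<inter> (free \<union> sliced_block a) = {}"
    using disjoint sliced_block_disjoint unfolding free_def by auto
  moreover have "sliced_block a \<noteq> {}" using block_nonempty[OF a] unfolding sliced_block_def by simp
  ultimately show ?thesis
    using bound[of "free \<union> sliced_block a" F] card_free_block_less[OF a] slice_partition[OF a]
    unfolding slice_coords_def by (simp add: Un_assoc)
qed

lemma slice_counts_if_bound: "slice_counts q (card free) (\<lambda>a. card (block a)) block_coords slice_coords
  free_coords (fixed_coords Q - fixed_coords F) t"
  by unfold_locales
    (use two_le_q block_bound free_block_bound coords_via_blocks coords_via_slices
      free_coords_subset finite_coords in auto)

end

end

text \<open>The cubes of \<open>F\<close> are already accounted for. This generalisation of the case \<open>F = {}\<close> lets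
  the induction hypothesis apply to both readings of a slice.\<close>

theorem card_cube_partition_ge:
  assumes "2 \<le> q" and "finite I" and "cube_partition q I (F \<union> Q)" and "F \<inter> Q = {}"
    and "Q \<noteq> {}"
  shows "1 + (q - 1) * card (fixed_coords Q - fixed_coords F) \<le> card Q"
  using assms
proof (induction "card Q" arbitrary: I F Q rule: less_induct)
  case less
  show ?case
  proof (cases "fixed_coords Q - fixed_coords F = {}")
    case True
    have "0 < card Q"
      using finite_cube_partition[OF less.prems(2,3)] less.prems(5) by (simp add: card_gt_0_iff)
    then show ?thesis unfolding True by simp
  next
    case False
    then obtain t where "t \<in> fixed_coords Q" "t \<notin> fixed_coords F" by auto
    then interpret pivot q I F Q t using less.prems by unfold_locales auto
    have "slice_counts q (card free) (\<lambda>a. card (block a)) block_coords slice_coords free_coords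
      (fixed_coords Q - fixed_coords F) t"
    proof (rule slice_counts_if_bound)
      fix F' Q' assume "card Q' < card Q" "cube_partition q (I - {t}) (F' \<union> Q')" "F' \<inter> Q' = {}"
        "Q' \<noteq> {}"
      then show "1 + (q - 1) * card (fixed_coords Q' - fixed_coords F') \<le> card Q'"
        using less.hyps[of Q' "I - {t}" F'] less.prems(1) finite_I by simp
    qed
    then show ?thesis using slice_counts.count_bound card_Q by fastforce
  qed
qed

corollary card_cube_partition_ge_fixed_coords:
  "2 \<le> q \<Longrightarrow> finite I \<Longrightarrow> cube_partition q I P \<Longrightarrow> 1 + (q - 1) * card (fixed_coords P) \<le> card P"
  using card_cube_partition_ge[of q I "{}" P] cube_partition_nonempty by simp


section \<open>Tight partitions\<close>

text \<open>A tight partition, one attaining the bound \<open>card_cube_partition_ge\<close>, contains siblings: \<open>q\<close>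
  cubes differing only in the value of a coordinate \<open>j\<close> that no other cube fixes. Merging them into
  their parent gives a smaller tight partition; by induction, some coordinate is fixed by all cubes.\<close>

definition siblings :: "nat \<Rightarrow> (nat \<rightharpoonup> nat) set \<Rightarrow> nat \<Rightarrow> (nat \<rightharpoonup> nat) \<Rightarrow> bool" where
  "siblings q P j c \<longleftrightarrow>
    j \<notin> dom c \<and> (\<forall>b<q. c(j \<mapsto> b) \<in> P) \<and> (\<forall>d\<in>P. j \<in> dom d \<longrightarrow> d(j := None) = c)"

lemma cube_partition_complement_unique:
  assumes q: "2 \<le> q"
    and c: "cube_partition q I (insert c A)" "c \<notin> A"
    and d: "cube_partition q I (insert d A)" "d \<notin> A"
  shows "c = d"
proof -
  have points_subset: "matches x d"
    if P: "cube_partition q I (insert c A)" and P': "cube_partition q I (insert d A)" and "c \<notin> A"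
      and x: "x \<in> grid q I" "matches x c" for c d x
  proof -
    obtain e where e: "e \<in> insert d A" "matches x e" using cube_partition_cover[OF P' x(1)] by blast
    have "e \<notin> A" using cube_partition_unique[OF P x(1), of e c] e x(2) \<open>c \<notin> A\<close> by auto
    with e show ?thesis by auto
  qed
  have cubes: "is_cube q I c" "is_cube q I d" using cube_partition_cube c(1) d(1) by blast+
  have "d \<subseteq>\<^sub>m c" using map_le_if_cube_points_subset[OF cubes q] points_subset c d by blast
  moreover have "c \<subseteq>\<^sub>m d" using map_le_if_cube_points_subset[OF cubes(2,1) q] points_subset c d by blast
  ultimately show ?thesis by (rule map_le_antisym[rotated])
qed

context pivot
begin

lemma pivot_slice_counts: "slice_counts q (card free) (\<lambda>a. card (block a)) block_coords
  slice_coords free_coords (fixed_coords Q - fixed_coords F) t"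
  by (rule slice_counts_if_bound, rule card_cube_partition_ge) (use two_le_q finite_I in auto)

context
  assumes tight: "card Q = 1 + (q - 1) * card (fixed_coords Q - fixed_coords F)"
begin

lemma tight_counts:
  "1 + (q - 1) * card (fixed_coords Q - fixed_coords F) = card free + (\<Sum>a<q. card (block a))"
  using tight card_Q by simp

lemma tight_card_block: "a < q \<Longrightarrow> card (block a) = 1 + (q - 1) * card (block_coords a)"
  by (rule slice_counts.tight_block[OF pivot_slice_counts tight_counts])

lemma tight_block_coords_disjoint:
  "a < q \<Longrightarrow> a' < q \<Longrightarrow> a \<noteq> a' \<Longrightarrow> block_coords a \<inter> block_coords a' = {}"
  by (rule slice_counts.tight_disjoint[OF pivot_slice_counts tight_counts])

lemma tight_cube_in_block:
  assumes a: "a < q" and j: "j \<in> block_coords a" and d: "d \<in> F \<union> Q" "j \<in> dom d"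
  shows "d \<in> block a"
proof -
  have j_ne_t: "j \<noteq> t" and j_F: "j \<notin> fixed_coords F" and j_free: "j \<notin> fixed_coords free"
    using j unfolding block_coords_def fixed_coords_sliced_block by auto
  have "d \<in> Q" "d \<notin> free" using d j_F j_free unfolding fixed_coords_def by auto
  then obtain a' where a': "a' < q" "d \<in> block a'" using Q_split by auto
  have "j \<in> block_coords a'"
    using a'(2) d(2) j_ne_t j_F j_free
    unfolding block_coords_def fixed_coords_sliced_block by (auto simp: fixed_coords_def)
  then have "a' = a" using tight_block_coords_disjoint[OF a'(1) a] j by blast
  then show ?thesis using a'(2) by simp
qed

lemma siblings_lift:
  assumes a: "a < q" and j: "j \<in> block_coords a"
    and sib: "siblings q (F \<union> free \<union> sliced_block a) j c"
    and sib_block: "\<forall>b<q. c(j \<mapsto> b) \<in> sliced_block a"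
  shows "j \<in> fixed_coords Q - fixed_coords F" and "siblings q (F \<union> Q) j (c(t \<mapsto> a))"
    and "\<forall>b<q. (c(t \<mapsto> a))(j \<mapsto> b) \<in> Q"
proof -
  have j_ne_t: "j \<noteq> t" and j_F: "j \<notin> fixed_coords F"
    using j unfolding block_coords_def fixed_coords_sliced_block by auto
  show "j \<in> fixed_coords Q - fixed_coords F"
    using j j_F unfolding block_coords_def fixed_coords_sliced_block
    by (auto simp: block_def fixed_coords_def)
  have members: "(c(t \<mapsto> a))(j \<mapsto> b) \<in> block a" if b: "b < q" for b
  proof -
    obtain d where d: "d \<in> block a" "c(j \<mapsto> b) = d(t := None)"
      using sib_block b unfolding sliced_block_def by auto
    have "d = (d(t := None))(t \<mapsto> a)" using d(1) unfolding block_def by (auto simp: fun_eq_iff)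
    also have "\<dots> = (c(t \<mapsto> a))(j \<mapsto> b)" using d(2)[symmetric] j_ne_t by (simp add: fun_upd_twist)
    finally show ?thesis using d(1) by simp
  qed
  then show "\<forall>b<q. (c(t \<mapsto> a))(j \<mapsto> b) \<in> Q" unfolding block_def by auto
  have "d(j := None) = c(t \<mapsto> a)" if d: "d \<in> F \<union> Q" "j \<in> dom d" for d
  proof -
    have "d \<in> block a" by (rule tight_cube_in_block[OF a j d])
    then have "d(t := None) \<in> sliced_block a" unfolding sliced_block_def by auto
    moreover have "j \<in> dom (d(t := None))" using d(2) j_ne_t by auto
    ultimately have "(d(t := None))(j := None) = c" using sib unfolding siblings_def by blast
    then have c_eq: "c = (d(t := None))(j := None)" by (rule sym)
    have "d t = Some a" using \<open>d \<in> block a\<close> unfolding block_def by simp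
    then show ?thesis unfolding c_eq using j_ne_t by (auto simp: fun_eq_iff)
  qed
  moreover have "j \<notin> dom (c(t \<mapsto> a))" using sib j_ne_t unfolding siblings_def by auto
  ultimately show "siblings q (F \<union> Q) j (c(t \<mapsto> a))"
    using members unfolding siblings_def block_def by auto
qed

lemma siblings_at_pivot:
  assumes no_coords: "\<And>a. a < q \<Longrightarrow> block_coords a = {}"
  shows "\<exists>c. siblings q (F \<union> Q) t c \<and> (\<forall>b<q. c(t \<mapsto> b) \<in> Q)"
proof -
  have "\<forall>a<q. \<exists>d. block a = {d}" using tight_card_block no_coords by (simp add: card_1_singleton_iff)
  then obtain d where d: "\<And>a. a < q \<Longrightarrow> block a = {d a}" by metis
  have q0: "0 < q" using two_le_q by simp
  define c where "c = (d 0)(t := None)"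
  have slices: "cube_partition q (I - {t}) (insert ((d a)(t := None)) (F \<union> free))" if "a < q" for a
    using slice_partition[OF that] d[OF that] unfolding sliced_block_def by simp
  have notin: "(d a)(t := None) \<notin> F \<union> free" if "a < q" for a
    using sliced_block_disjoint[of a] d[OF that] unfolding sliced_block_def by auto
  \<comment> \<open>each slice is \<open>F \<union> free\<close> plus one cube, which is hence the same for all slices\<close>
  have same: "(d a)(t := None) = c" if "a < q" for a
    unfolding c_def
    by (rule cube_partition_complement_unique[OF two_le_q slices[OF that] notin[OF that]
          slices[OF q0] notin[OF q0]])
  have d_eq: "d a = c(t \<mapsto> a)" if "a < q" for a
  proof -
    have "d a t = Some a" using d[OF that] unfolding block_def by auto
    then show ?thesis using same[OF that, symmetric] by (auto simp: fun_eq_iff)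
  qed
  have "e(t := None) = c" if "e \<in> F \<union> Q" "t \<in> dom e" for e
  proof -
    have "e \<notin> F" using that(2) by (auto dest: F_free)
    then have "e \<in> Q" "e \<notin> free" using that unfolding free_def by auto
    then obtain a where "a < q" "e \<in> block a" using Q_split by auto
    then show ?thesis using d same by auto
  qed
  moreover have "c(t \<mapsto> b) \<in> Q" if "b < q" for b
    using d[OF that] d_eq[OF that] unfolding block_def by auto
  moreover have "t \<notin> dom c" unfolding c_def by simp
  ultimately show ?thesis unfolding siblings_def by blast
qed

end

end

theorem tight_has_siblings:
  assumes "2 \<le> q" and "finite I" and "cube_partition q I (F \<union> Q)" and "F \<inter> Q = {}"
    and "card Q = 1 + (q - 1) * card (fixed_coords Q - fixed_coords F)"
    and "fixed_coords Q - fixed_coords F \<noteq> {}"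
  shows "\<exists>j c. j \<in> fixed_coords Q - fixed_coords F \<and> siblings q (F \<union> Q) j c \<and> (\<forall>b<q. c(j \<mapsto> b) \<in> Q)"
  using assms
proof (induction "card Q" arbitrary: I F Q rule: less_induct)
  case less
  obtain t where t: "t \<in> fixed_coords Q" "t \<notin> fixed_coords F" using less.prems(6) by auto
  then interpret pivot q I F Q t using less.prems by unfold_locales auto
  show ?case
  proof (cases "\<exists>a<q. block_coords a \<noteq> {}")
    case True
    then obtain a where a: "a < q" "block_coords a \<noteq> {}" by blast
    have "card (sliced_block a) < card Q"
      using card_free_block_less[OF a(1)] card_sliced_block by simp
    moreover have "card (sliced_block a) =
        1 + (q - 1) * card (fixed_coords (sliced_block a) - fixed_coords (F \<union> free))"
      using tight_card_block[OF less.prems(5) a(1)] card_sliced_block unfolding block_coords_def by simp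
    ultimately obtain j c where "j \<in> block_coords a" "siblings q (F \<union> free \<union> sliced_block a) j c"
      "\<forall>b<q. c(j \<mapsto> b) \<in> sliced_block a"
      using less.hyps[of "sliced_block a" "I - {t}" "F \<union> free"] slice_partition[OF a(1)]
        sliced_block_disjoint a(2) less.prems(1) finite_I
      unfolding block_coords_def by auto
    then show ?thesis using siblings_lift[OF less.prems(5) a(1)] by blast
  next
    case False
    then show ?thesis using siblings_at_pivot[OF less.prems(5)] t by blast
  qed
qed

context
  fixes q :: nat and I :: "nat set" and P :: "(nat \<rightharpoonup> nat) set" and j :: nat and c :: "nat \<rightharpoonup> nat"
  assumes two_le_q: "2 \<le> q" and partition: "cube_partition q I P" and siblings: "siblings q P j c"
begin

lemma siblings_parent_map_le: "c \<subseteq>\<^sub>m c(j \<mapsto> b)"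
  using siblings unfolding siblings_def map_le_def by auto

lemma siblings_fixing: "{d \<in> P. j \<in> dom d} = (\<lambda>b. c(j \<mapsto> b)) ` {..<q}"
proof
  show "{d \<in> P. j \<in> dom d} \<subseteq> (\<lambda>b. c(j \<mapsto> b)) ` {..<q}"
  proof
    fix d assume d: "d \<in> {d \<in> P. j \<in> dom d}"
    then obtain b where b: "d j = Some b" by auto
    have "b < q" using cube_partition_value_less[OF partition] d b by auto
    moreover have "c = d(j := None)" using siblings d unfolding siblings_def by auto
    then have "d = c(j \<mapsto> b)" using b by (simp add: fun_upd_idem)
    ultimately show "d \<in> (\<lambda>b. c(j \<mapsto> b)) ` {..<q}" by blast
  qed
  show "(\<lambda>b. c(j \<mapsto> b)) ` {..<q} \<subseteq> {d \<in> P. j \<in> dom d}"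
    using siblings unfolding siblings_def by auto
qed

lemma siblings_parent_notin: "c \<notin> P"
proof -
  have "c(j \<mapsto> 0) \<in> P" using siblings two_le_q unfolding siblings_def by auto
  moreover have "(c(j \<mapsto> 0))(j := None) = c" using siblings unfolding siblings_def by (auto simp: domIff)
  ultimately show ?thesis using cube_partition_free_coord_notin[OF partition, of "c(j \<mapsto> 0)" j] two_le_q
    by auto
qed

lemma cube_partition_merge: "cube_partition q I (insert c {d \<in> P. j \<notin> dom d})"
  unfolding cube_partition_def
proof (intro conjI ballI)
  have "is_cube q I (c(j \<mapsto> 0))"
    using siblings two_le_q cube_partition_cube[OF partition] unfolding siblings_def by auto
  then have "is_cube q I c" using is_cube_map_le siblings_parent_map_le by blast
  then show "is_cube q I d" if "d \<in> insert c {d \<in> P. j \<notin> dom d}" for d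
    using that cube_partition_cube[OF partition] by auto
next
  fix x assume x: "x \<in> grid q I"
  obtain d where d: "d \<in> P" "matches x d" using cube_partition_cover[OF partition x] by blast
  have "j \<in> I" using siblings two_le_q fixed_coords_subset[OF partition]
    unfolding siblings_def fixed_coords_def by fastforce
  then have xj: "x j < q" using x unfolding grid_def by auto
  have other: "e = d" if "e \<in> P" "matches x e" for e
    using cube_partition_unique[OF partition x that(1) d(1) that(2) d(2)] .
  show "\<exists>!e\<in>insert c {d \<in> P. j \<notin> dom d}. matches x e"
  proof (cases "j \<in> dom d")
    case True
    then obtain b where "d = c(j \<mapsto> b)" using siblings_fixing d(1) by auto
    then have "matches x c" using d(2) matches_map_le siblings_parent_map_le by blast
    moreover have "e = c" if "e \<in> P" "j \<notin> dom e" "matches x e" for e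
      using other[OF that(1,3)] that(2) True by simp
    ultimately show ?thesis by blast
  next
    case False
    have "\<not> matches x c"
    proof
      assume "matches x c"
      then have "matches x (c(j \<mapsto> x j))" unfolding matches_def by simp
      moreover have "c(j \<mapsto> x j) \<in> P" using siblings xj unfolding siblings_def by auto
      ultimately have "c(j \<mapsto> x j) = d" using other by blast
      with False show False by auto
    qed
    then show ?thesis using d False other by blast
  qed
qed

lemma card_merge_siblings: "finite P \<Longrightarrow> card (insert c {d \<in> P. j \<notin> dom d}) + (q - 1) = card P"
proof -
  assume fin: "finite P"
  have "inj_on (\<lambda>b. c(j \<mapsto> b)) {..<q}" by (rule inj_onI) (metis fun_upd_same option.inject)
  then have "card {d \<in> P. j \<in> dom d} = q" unfolding siblings_fixing by (simp add: card_image)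
  moreover have "card P = card {d \<in> P. j \<notin> dom d} + card {d \<in> P. j \<in> dom d}"
    using fin by (subst card_Un_disjoint[symmetric]) (auto intro: arg_cong[where f = card])
  ultimately show ?thesis using fin siblings_parent_notin two_le_q by simp
qed

lemma fixed_coords_merge: "fixed_coords (insert c {d \<in> P. j \<notin> dom d}) = fixed_coords P - {j}"
proof -
  have "fixed_coords P = fixed_coords {d \<in> P. j \<notin> dom d} \<union> fixed_coords {d \<in> P. j \<in> dom d}"
    unfolding fixed_coords_def by auto
  moreover have "fixed_coords {d \<in> P. j \<in> dom d} = insert j (dom c)"
  proof -
    have "0 < q" using two_le_q by simp
    then show ?thesis unfolding siblings_fixing fixed_coords_def by force
  qed
  ultimately show ?thesis using siblings unfolding siblings_def fixed_coords_def by auto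
qed

lemma tight_merge:
  assumes fin: "finite I" and tight: "card P = 1 + (q - 1) * card (fixed_coords P)"
  shows "card (insert c {d \<in> P. j \<notin> dom d})
    = 1 + (q - 1) * card (fixed_coords (insert c {d \<in> P. j \<notin> dom d}))"
proof -
  have "j \<in> fixed_coords P"
    using siblings two_le_q unfolding siblings_def fixed_coords_def by force
  moreover have "finite (fixed_coords P)"
    using fixed_coords_subset[OF partition] fin by (auto intro: finite_subset)
  ultimately have "card (fixed_coords P) = card (fixed_coords P - {j}) + 1"
    by (metis card_Suc_Diff1 Suc_eq_plus1)
  then have "card P = 1 + ((q - 1) * card (fixed_coords P - {j}) + (q - 1) * 1)"
    using tight by (metis distrib_left)
  then show ?thesis
    using card_merge_siblings finite_cube_partition[OF fin partition] unfolding fixed_coords_merge by linarith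
qed

lemma common_coord_unmerge:
  assumes common: "\<forall>d\<in>insert c {d \<in> P. j \<notin> dom d}. t \<in> dom d"
  shows "\<forall>d\<in>P. t \<in> dom d"
proof
  fix d assume d: "d \<in> P"
  show "t \<in> dom d"
  proof (cases "j \<in> dom d")
    case True
    then obtain b where "d = c(j \<mapsto> b)" using siblings_fixing d by blast
    moreover have "t \<in> dom c" using common by simp
    ultimately show ?thesis by simp
  next
    case False
    then show ?thesis using common d by blast
  qed
qed

lemma merge_without_coords:
  assumes no_coords: "fixed_coords (insert c {d \<in> P. j \<notin> dom d}) = {}"
  shows "\<forall>d\<in>P. j \<in> dom d"
proof
  fix d assume d: "d \<in> P"
  show "j \<in> dom d"
  proof (rule ccontr)
    assume "j \<notin> dom d"
    then have "d \<in> insert c {d \<in> P. j \<notin> dom d}" using d by simp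
    then have "dom d = {}" using no_coords unfolding fixed_coords_def by blast
    moreover have "dom c = {}" using no_coords unfolding fixed_coords_def by blast
    ultimately have "d = c" by simp
    with d siblings_parent_notin show False by simp
  qed
qed

end

theorem tight_cube_partition_common_coord:
  assumes "2 \<le> q" and "finite I" and "cube_partition q I P"
    and "card P = 1 + (q - 1) * card (fixed_coords P)" and "fixed_coords P \<noteq> {}"
  shows "\<exists>t. \<forall>c\<in>P. t \<in> dom c"
  using assms
proof (induction "card P" arbitrary: P rule: less_induct)
  case less
  obtain j c where sib: "siblings q P j c"
    using tight_has_siblings[of q I "{}" P] less.prems by auto
  define P' where "P' = insert c {d \<in> P. j \<notin> dom d}"
  show ?case
  proof (cases "fixed_coords P' = {}")
    case True
    then show ?thesis using merge_without_coords[OF less.prems(1,3) sib] unfolding P'_def by blast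
  next
    case False
    have "card P' < card P"
      using card_merge_siblings[OF less.prems(1,3) sib] finite_cube_partition[OF less.prems(2,3)] less.prems(1)
      unfolding P'_def by linarith
    moreover have "cube_partition q I P'"
      unfolding P'_def by (rule cube_partition_merge[OF less.prems(1,3) sib])
    moreover have "card P' = 1 + (q - 1) * card (fixed_coords P')"
      unfolding P'_def by (rule tight_merge[OF less.prems(1,3) sib less.prems(2,4)])
    ultimately obtain t where "\<forall>d\<in>P'. t \<in> dom d" using less.hyps less.prems(1,2) False by blast
    then show ?thesis using common_coord_unmerge[OF less.prems(1,3) sib] unfolding P'_def by blast
  qed
qed


section \<open>Upper bound on the number of partitions\<close>

lemma cube_points_eq_PiE:
  assumes "is_cube q I c"
  shows "cube_points q I c = (\<Pi>\<^sub>E i\<in>I. if i \<in> dom c then {the (c i)} else {..<q})"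
proof (intro set_eqI iffI)
  fix x assume "x \<in> cube_points q I c"
  then show "x \<in> (\<Pi>\<^sub>E i\<in>I. if i \<in> dom c then {the (c i)} else {..<q})"
    using assms unfolding cube_points_def grid_def matches_def is_cube_def by (auto simp: PiE_iff)
next
  fix x assume x: "x \<in> (\<Pi>\<^sub>E i\<in>I. if i \<in> dom c then {the (c i)} else {..<q})"
  have xi: "x i \<in> (if i \<in> dom c then {the (c i)} else {..<q})" if "i \<in> I" for i
    using x that by (simp add: PiE_iff)
  have "x i < q" if "i \<in> I" for i
    using xi[OF that] assms unfolding is_cube_def by (cases "i \<in> dom c") auto
  moreover have "c i = Some (x i)" if "i \<in> dom c" for i
    using xi[of i] that assms unfolding is_cube_def by auto
  ultimately show "x \<in> cube_points q I c"
    using x unfolding cube_points_def grid_def matches_def by (auto simp: PiE_iff)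
qed

lemma card_cube_points:
  assumes c: "is_cube q I c" and fin: "finite I"
  shows "card (cube_points q I c) = q ^ (card I - card (dom c))"
proof -
  have dom: "dom c \<subseteq> I" using c unfolding is_cube_def by simp
  have "card (cube_points q I c) = (\<Prod>i\<in>I. card (if i \<in> dom c then {the (c i)} else {..<q}))"
    unfolding cube_points_eq_PiE[OF c] using fin by (simp add: card_PiE)
  also have "\<dots> = (\<Prod>i\<in>I. if i \<in> dom c then 1 else q)" by (rule prod.cong) auto
  also have "\<dots> = q ^ card (I - dom c)"
    using fin by (simp add: prod.If_cases Int_absorb1[OF dom] Diff_eq)
  also have "card (I - dom c) = card I - card (dom c)"
    using dom fin by (simp add: card_Diff_subset finite_subset)
  finally show ?thesis .
qed

lemma card_grid: "finite I \<Longrightarrow> card (grid q I) = q ^ card I"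
  unfolding grid_def by (simp add: card_PiE)

lemma card_cube_partition_le:
  assumes q: "0 < q" and fin: "finite I" and P: "cube_partition q I P"
    and codim: "\<And>c. c \<in> P \<Longrightarrow> card (dom c) \<le> m"
  shows "card P \<le> q ^ m"
proof -
  define n where "n = card I"
  have fP: "finite P" using finite_cube_partition[OF fin P] .
  have cover: "grid q I = (\<Union>c\<in>P. cube_points q I c)"
    unfolding cube_points_def using cube_partition_cover[OF P] by auto
  have "q ^ n = card (\<Union>c\<in>P. cube_points q I c)" unfolding cover[symmetric] n_def card_grid[OF fin] ..
  also have "\<dots> = (\<Sum>c\<in>P. card (cube_points q I c))"
  proof (rule card_UN_disjoint[OF fP])
    show "\<forall>c\<in>P. finite (cube_points q I c)"
      using fin unfolding cube_points_def grid_def by (simp add: finite_PiE)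
    show "\<forall>c\<in>P. \<forall>d\<in>P. c \<noteq> d \<longrightarrow> cube_points q I c \<inter> cube_points q I d = {}"
      using cube_partition_unique[OF P] unfolding cube_points_def by blast
  qed
  also have "\<dots> \<ge> (\<Sum>c\<in>P. q ^ (n - m))"
  proof (rule sum_mono)
    fix c assume "c \<in> P"
    then show "q ^ (n - m) \<le> card (cube_points q I c)"
      using card_cube_points[OF cube_partition_cube[OF P] fin] codim q unfolding n_def
      by (simp add: power_increasing diff_le_mono2)
  qed
  finally have "card P * q ^ (n - m) \<le> q ^ n" by simp
  also have "q ^ n \<le> q ^ m * q ^ (n - m)"
    using q by (simp add: power_add[symmetric] power_increasing)
  finally show ?thesis using q by simp
qed

definition repunit :: "nat \<Rightarrow> nat \<Rightarrow> nat" where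
  "repunit q m = (\<Sum>k<m. q ^ k)"

lemma repunit_Suc: "repunit q (Suc m) = 1 + q * repunit q m"
  unfolding repunit_def sum.lessThan_Suc_shift by (simp add: sum_distrib_left)

lemma repunit_eq: "0 < q \<Longrightarrow> 1 + (q - 1) * repunit q m = q ^ m"
proof (induction m)
  case 0
  then show ?case by (simp add: repunit_def)
next
  case (Suc m)
  then obtain r where r: "q = Suc r" by (cases q) auto
  have "1 + (q - 1) * repunit q (Suc m) = q * (1 + (q - 1) * repunit q m)"
    unfolding repunit_Suc r by (simp add: algebra_simps)
  with Suc.IH[OF Suc.prems] show ?case by (simp only: power_Suc)
qed

definition codim_partitions :: "nat \<Rightarrow> nat \<Rightarrow> nat set \<Rightarrow> (nat \<rightharpoonup> nat) set set" where
  "codim_partitions q m I = {P. cube_partition q I P \<and> (\<forall>c\<in>P. card (dom c) \<le> m)}"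

lemma finite_codim_partitions: "finite I \<Longrightarrow> finite (codim_partitions q m I)"
proof -
  assume "finite I"
  moreover have "codim_partitions q m I \<subseteq> Pow (cubes q I)"
    unfolding codim_partitions_def using cube_partition_subset_cubes by blast
  ultimately show ?thesis using finite_cubes finite_subset by blast
qed

text \<open>A partition with many fixed coordinates is tight, by the two bounds above.\<close>

lemma common_coord_or_few_coords:
  assumes q: "2 \<le> q" and fin: "finite I" and m: "1 \<le> m" and P: "P \<in> codim_partitions q m I"
  shows "(\<exists>t\<in>I. \<forall>c\<in>P. t \<in> dom c) \<or> card (fixed_coords P) < repunit q m"
proof (rule disjCI)
  assume "\<not> card (fixed_coords P) < repunit q m"
  then have many: "repunit q m \<le> card (fixed_coords P)" by simp
  have partition: "cube_partition q I P" and codim: "\<forall>c\<in>P. card (dom c) \<le> m"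
    using P unfolding codim_partitions_def by auto
  have lower: "1 + (q - 1) * card (fixed_coords P) \<le> card P"
    using card_cube_partition_ge_fixed_coords[OF q fin partition] .
  have upper: "card P \<le> 1 + (q - 1) * repunit q m"
    using card_cube_partition_le[OF _ fin partition] codim q repunit_eq[of q m] by simp
  have "(q - 1) * card (fixed_coords P) \<le> (q - 1) * repunit q m" using lower upper by linarith
  then have "card (fixed_coords P) = repunit q m" using many q by simp
  moreover have "1 \<le> repunit q m" using m by (cases m) (auto simp: repunit_Suc)
  ultimately obtain t where t: "\<forall>c\<in>P. t \<in> dom c"
    using tight_cube_partition_common_coord[OF q fin partition] lower upper by fastforce
  obtain c where "c \<in> P" using cube_partition_nonempty[OF partition] q by fastforce
  then have "t \<in> I" using t fixed_coords_subset[OF partition] unfolding fixed_coords_def by blast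
  with t show "\<exists>t\<in>I. \<forall>c\<in>P. t \<in> dom c" by blast
qed

lemma cube_partition_eq_unslice:
  assumes P: "cube_partition q I P" and common: "\<forall>c\<in>P. t \<in> dom c"
  shows "P = (\<Union>a<q. (\<lambda>c. c(t \<mapsto> a)) ` slice t a P)"
proof
  show "P \<subseteq> (\<Union>a<q. (\<lambda>c. c(t \<mapsto> a)) ` slice t a P)"
  proof
    fix c assume c: "c \<in> P"
    obtain a where a: "c t = Some a" using common c by auto
    have "a < q" using cube_partition_value_less[OF P c a] .
    moreover have "c(t := None) \<in> slice t a P" using c a unfolding slice_def by auto
    moreover have "c = (c(t := None))(t \<mapsto> a)" using a by (simp add: fun_upd_idem)
    ultimately show "c \<in> (\<Union>a<q. (\<lambda>c. c(t \<mapsto> a)) ` slice t a P)" by blast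
  qed
  show "(\<Union>a<q. (\<lambda>c. c(t \<mapsto> a)) ` slice t a P) \<subseteq> P"
    using common unfolding slice_def by (auto simp: fun_upd_idem)
qed

lemma slice_codim_partitions:
  assumes P: "P \<in> codim_partitions q m I" and common: "\<forall>c\<in>P. t \<in> dom c" and t: "t \<in> I"
    and a: "a < q" and fin: "finite I"
  shows "slice t a P \<in> codim_partitions q (m - 1) (I - {t})"
proof -
  have partition: "cube_partition q I P" and codim: "\<forall>c\<in>P. card (dom c) \<le> m"
    using P unfolding codim_partitions_def by auto
  have "card (dom d) \<le> m - 1" if d: "d \<in> slice t a P" for d
  proof -
    obtain c where c: "c \<in> P" "d = c(t := None)" using d unfolding slice_def by auto
    have "finite (dom c)"
      using cube_partition_cube[OF partition c(1)] fin unfolding is_cube_def by (meson finite_subset)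
    then show ?thesis using c common codim by (simp add: card_Diff_singleton diff_le_mono)
  qed
  then show ?thesis
    using cube_partition_slice[OF partition t a] unfolding codim_partitions_def by auto
qed

text \<open>A partition whose cubes all fix \<open>t\<close> is determined by \<open>t\<close> and its \<open>q\<close> slices at \<open>t\<close>.\<close>

lemma card_common_coord_partitions_le:
  assumes fin: "finite I"
  shows "card {P \<in> codim_partitions q m I. \<exists>t\<in>I. \<forall>c\<in>P. t \<in> dom c}
    \<le> (\<Sum>t\<in>I. card (codim_partitions q (m - 1) (I - {t})) ^ q)"
proof -
  define A where "A = {P \<in> codim_partitions q m I. \<exists>t\<in>I. \<forall>c\<in>P. t \<in> dom c}"
  define pivot where "pivot P = (SOME t. t \<in> I \<and> (\<forall>c\<in>P. t \<in> dom c))"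
    for P :: "(nat \<rightharpoonup> nat) set"
  define f where "f P = (pivot P, \<lambda>a\<in>{..<q}. slice (pivot P) a P)" for P
  define T where "T = (SIGMA t:I. {..<q} \<rightarrow>\<^sub>E codim_partitions q (m - 1) (I - {t}))"
  have pivot: "pivot P \<in> I" "\<forall>c\<in>P. pivot P \<in> dom c" if "P \<in> A" for P
    using someI_ex[of "\<lambda>t. t \<in> I \<and> (\<forall>c\<in>P. t \<in> dom c)"] that unfolding A_def pivot_def by auto
  have "inj_on f A"
  proof (rule inj_onI)
    fix P P' assume P: "P \<in> A" and P': "P' \<in> A" and eq: "f P = f P'"
    have t: "pivot P = pivot P'" using eq unfolding f_def by simp
    have slices: "slice (pivot P) a P = slice (pivot P) a P'" if "a < q" for a
    proof -
      have "snd (f P) a = snd (f P') a" using eq by simp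
      then show ?thesis using that t unfolding f_def by simp
    qed
    have partitions: "cube_partition q I P" "cube_partition q I P'"
      using P P' unfolding A_def codim_partitions_def by auto
    show "P = P'"
      by (subst cube_partition_eq_unslice[OF partitions(1) pivot(2)[OF P]],
          subst cube_partition_eq_unslice[OF partitions(2) pivot(2)[OF P']])
        (use t slices in simp)
  qed
  moreover have "f ` A \<subseteq> T"
  proof
    fix y assume "y \<in> f ` A"
    then obtain P where P: "P \<in> A" "y = f P" by blast
    then have "P \<in> codim_partitions q m I" unfolding A_def by simp
    then show "y \<in> T"
      using pivot[OF P(1)] slice_codim_partitions fin unfolding P(2) f_def T_def by auto
  qed
  moreover have "finite T" unfolding T_def using fin finite_codim_partitions by (simp add: finite_PiE)
  ultimately have "card A \<le> card T" by (rule card_inj_on_le)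
  also have "card T = (\<Sum>t\<in>I. card (codim_partitions q (m - 1) (I - {t})) ^ q)"
    unfolding T_def using fin finite_codim_partitions by (simp add: card_SigmaI finite_PiE card_PiE)
  finally show ?thesis unfolding A_def .
qed

lemma card_small_subsets_le:
  assumes fin: "finite I"
  shows "card {J. J \<subseteq> I \<and> card J \<le> K} \<le> (K + 1) * (card I + 1) ^ K"
proof -
  have "{J. J \<subseteq> I \<and> card J \<le> K} = (\<Union>k\<le>K. {J. J \<subseteq> I \<and> card J = k})" by auto
  then have "card {J. J \<subseteq> I \<and> card J \<le> K} \<le> (\<Sum>k\<le>K. card {J. J \<subseteq> I \<and> card J = k})"
    by (simp add: card_UN_le)
  also have "\<dots> = (\<Sum>k\<le>K. card I choose k)" using n_subsets[OF fin] by simp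
  also have "\<dots> \<le> (\<Sum>k\<le>K. (card I + 1) ^ K)"
  proof (rule sum_mono)
    fix k assume k: "k \<in> {..K}"
    have "card I choose k \<le> (card I + 1) ^ k"
      using binomial_le_pow[of k "card I"] power_mono[of "card I" "card I + 1" k]
      by (cases "k \<le> card I") (auto simp: binomial_eq_0)
    also have "\<dots> \<le> (card I + 1) ^ K" using k by (simp add: power_increasing)
    finally show "card I choose k \<le> (card I + 1) ^ K" .
  qed
  finally show ?thesis by simp
qed

text \<open>Partitions with at most \<open>K\<close> fixed coordinates live on a \<open>K\<close>-subset of the coordinates, and
  there are only boundedly many partitions with a given set of fixed coordinates.\<close>

lemma card_few_coords_partitions_le:
  assumes fin: "finite I"
  shows "card {P \<in> codim_partitions q m I. card (fixed_coords P) \<le> K}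
    \<le> (K + 1) * 2 ^ ((q + 1) ^ K) * (card I + 1) ^ K"
proof -
  define JJ where "JJ = {J. J \<subseteq> I \<and> card J \<le> K}"
  have fin_JJ: "finite JJ" and fin_J: "\<And>J. J \<in> JJ \<Longrightarrow> finite J"
    using fin unfolding JJ_def by (auto intro: finite_subset)
  have "{P \<in> codim_partitions q m I. card (fixed_coords P) \<le> K} \<subseteq> (\<Union>J\<in>JJ. Pow (cubes q J))"
  proof
    fix P assume P: "P \<in> {P \<in> codim_partitions q m I. card (fixed_coords P) \<le> K}"
    then have partition: "cube_partition q I P" unfolding codim_partitions_def by auto
    have "P \<subseteq> cubes q (fixed_coords P)"
    proof
      fix c assume "c \<in> P"
      then show "c \<in> cubes q (fixed_coords P)"
        using cube_partition_cube[OF partition] unfolding cubes_def is_cube_def fixed_coords_def by auto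
    qed
    moreover have "fixed_coords P \<in> JJ" unfolding JJ_def using fixed_coords_subset[OF partition] P by auto
    ultimately show "P \<in> (\<Union>J\<in>JJ. Pow (cubes q J))" by auto
  qed
  then have "card {P \<in> codim_partitions q m I. card (fixed_coords P) \<le> K}
      \<le> card (\<Union>J\<in>JJ. Pow (cubes q J))"
    using fin_JJ fin_J finite_cubes by (intro card_mono) auto
  also have "\<dots> \<le> (\<Sum>J\<in>JJ. card (Pow (cubes q J)))" by (rule card_UN_le[OF fin_JJ])
  also have "\<dots> \<le> (\<Sum>J\<in>JJ. 2 ^ ((q + 1) ^ K))"
  proof (rule sum_mono)
    fix J assume J: "J \<in> JJ"
    have "card J \<le> K" using J unfolding JJ_def by simp
    then have "(q + 1) ^ card J \<le> (q + 1) ^ K" by (simp add: power_increasing)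
    with card_cubes_le[OF fin_J[OF J], of q] have "card (cubes q J) \<le> (q + 1) ^ K" by linarith
    then show "card (Pow (cubes q J)) \<le> 2 ^ ((q + 1) ^ K)"
      using finite_cubes[OF fin_J[OF J]] by (simp add: card_Pow power_increasing)
  qed
  also have "\<dots> \<le> (K + 1) * (card I + 1) ^ K * 2 ^ ((q + 1) ^ K)"
    using card_small_subsets_le[OF fin, of K] unfolding JJ_def by simp
  finally show ?thesis by (simp only: mult.commute mult.left_commute)
qed

lemma card_codim_partitions_0: "finite I \<Longrightarrow> 0 < q \<Longrightarrow> card (codim_partitions q 0 I) \<le> 1"
proof -
  assume fin: "finite I" and q: "0 < q"
  have "P = {Map.empty}" if "P \<in> codim_partitions q 0 I" for P
  proof -
    have partition: "cube_partition q I P" and codim: "\<forall>c\<in>P. card (dom c) = 0"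
      using that unfolding codim_partitions_def by auto
    have "finite (dom c)" if "c \<in> P" for c
      using cube_partition_cube[OF partition that] fin unfolding is_cube_def by (meson finite_subset)
    then have "\<forall>c\<in>P. c = Map.empty" using codim by simp
    then show ?thesis using cube_partition_nonempty[OF partition q] by auto
  qed
  then have "codim_partitions q 0 I \<subseteq> {{Map.empty}}" by blast
  then show ?thesis by (auto dest!: subset_singletonD)
qed

lemma card_common_coord_partitions_le_pow:
  assumes fin: "finite I"
    and bound: "\<And>J. finite J \<Longrightarrow> card (codim_partitions q m J) \<le> (card J + C) ^ repunit q m"
  shows "card {P \<in> codim_partitions q (Suc m) I. \<exists>t\<in>I. \<forall>c\<in>P. t \<in> dom c}
    \<le> card I * (card I + C) ^ (q * repunit q m)"
proof -
  have "card (codim_partitions q m (I - {t})) ^ q \<le> (card I + C) ^ (q * repunit q m)" for t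
  proof -
    have "card (codim_partitions q m (I - {t})) \<le> (card (I - {t}) + C) ^ repunit q m"
      using bound fin by simp
    also have "\<dots> \<le> (card I + C) ^ repunit q m" using card_Diff1_le[of I t] by (simp add: power_mono)
    finally have "card (codim_partitions q m (I - {t})) ^ q \<le> ((card I + C) ^ repunit q m) ^ q"
      by (rule power_mono) simp
    then show ?thesis by (simp add: power_mult[symmetric] mult.commute)
  qed
  then have "(\<Sum>t\<in>I. card (codim_partitions q m (I - {t})) ^ q) \<le> (\<Sum>t\<in>I. (card I + C) ^ (q * repunit q m))"
    by (rule sum_mono)
  with card_common_coord_partitions_le[OF fin, of q "Suc m"] show ?thesis by simp
qed

theorem card_codim_partitions_le:
  assumes q: "2 \<le> q"
  shows "\<exists>C. \<forall>I. finite I \<longrightarrow> card (codim_partitions q m I) \<le> (card I + C) ^ repunit q m"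
proof (induction m)
  case 0
  show ?case using card_codim_partitions_0 q by (auto simp: repunit_def)
next
  case (Suc m)
  obtain C where C: "\<And>J. finite J \<Longrightarrow> card (codim_partitions q m J) \<le> (card J + C) ^ repunit q m"
    using Suc by blast
  define K where "K = q * repunit q m"
  define D where "D = (K + 1) * 2 ^ ((q + 1) ^ K)"
  have repunit: "repunit q (Suc m) = K + 1" unfolding K_def repunit_Suc by simp
  have "card (codim_partitions q (Suc m) I) \<le> (card I + (C + D)) ^ repunit q (Suc m)" if fin: "finite I" for I
  proof -
    define n where "n = card I"
    define A1 where "A1 = {P \<in> codim_partitions q (Suc m) I. \<exists>t\<in>I. \<forall>c\<in>P. t \<in> dom c}"
    define A2 where "A2 = {P \<in> codim_partitions q (Suc m) I. card (fixed_coords P) \<le> K}"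
    have "codim_partitions q (Suc m) I \<subseteq> A1 \<union> A2"
      using common_coord_or_few_coords[OF q fin] repunit unfolding A1_def A2_def by fastforce
    moreover have "finite (A1 \<union> A2)" using finite_codim_partitions[OF fin] unfolding A1_def A2_def by auto
    ultimately have "card (codim_partitions q (Suc m) I) \<le> card (A1 \<union> A2)" by (simp add: card_mono)
    also have "\<dots> \<le> card A1 + card A2" by (rule card_Un_le)
    also have "\<dots> \<le> n * (n + C) ^ K + D * (n + 1) ^ K"
    proof (rule add_mono)
      show "card A1 \<le> n * (n + C) ^ K"
        using card_common_coord_partitions_le_pow[OF fin C] unfolding A1_def K_def n_def .
      show "card A2 \<le> D * (n + 1) ^ K"
        using card_few_coords_partitions_le[OF fin, of q "Suc m" K] unfolding A2_def D_def n_def .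
    qed
    also have "\<dots> \<le> n * (n + (C + D)) ^ K + D * (n + (C + D)) ^ K"
    proof -
      have "0 < D" unfolding D_def by simp
      then show ?thesis by (intro add_mono mult_left_mono power_mono) simp_all
    qed
    also have "\<dots> \<le> (n + (C + D)) ^ repunit q (Suc m)"
      unfolding repunit by (simp add: algebra_simps)
    finally show ?thesis unfolding n_def .
  qed
  then show ?case by blast
qed


section \<open>Lower bound on the number of partitions\<close>

text \<open>Perfect partitions are built recursively by \<open>stack\<close>: fix a new coordinate \<open>t\<close> and put on the
  slices \<open>t = a\<close> perfect partitions of codimension \<open>m - 1\<close> with pairwise disjoint sets of fixed
  coordinates. There are \<open>n\<close> choices for \<open>t\<close> and about \<open>n ^ (q * repunit q (m - 1))\<close> for the slices.\<close>

definition perfect_partitions :: "nat \<Rightarrow> nat \<Rightarrow> nat set \<Rightarrow> (nat \<rightharpoonup> nat) set set" where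
  "perfect_partitions q m I = {P \<in> codim_partitions q m I. card (fixed_coords P) = repunit q m}"

definition stack :: "nat \<Rightarrow> nat \<Rightarrow> (nat \<rightharpoonup> nat) set list \<Rightarrow> (nat \<rightharpoonup> nat) set" where
  "stack q t Ps = (\<Union>a<q. (\<lambda>c. c(t \<mapsto> a)) ` (Ps ! a))"

definition disjoint_perfect_lists :: "nat \<Rightarrow> nat \<Rightarrow> nat \<Rightarrow> nat set \<Rightarrow> (nat \<rightharpoonup> nat) set list set" where
  "disjoint_perfect_lists q m k J = {Ps. length Ps = k \<and> (\<forall>i<k. Ps ! i \<in> perfect_partitions q m J) \<and>
      (\<forall>i<k. \<forall>j<k. i \<noteq> j \<longrightarrow> fixed_coords (Ps ! i) \<inter> fixed_coords (Ps ! j) = {})}"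

lemma cube_partition_mono:
  assumes P: "cube_partition q J P" and sub: "J \<subseteq> I"
  shows "cube_partition q I P"
  unfolding cube_partition_def
proof (intro conjI ballI)
  fix c assume "c \<in> P"
  then show "is_cube q I c" using cube_partition_cube[OF P] sub unfolding is_cube_def by blast
next
  fix x assume x: "x \<in> grid q I"
  have x': "restrict x J \<in> grid q J" using x sub unfolding grid_def by auto
  have "matches x c \<longleftrightarrow> matches (restrict x J) c" if "c \<in> P" for c
    using cube_partition_cube[OF P that] unfolding is_cube_def matches_def by auto
  then show "\<exists>!c\<in>P. matches x c" using P x' unfolding cube_partition_def by metis
qed

lemma perfect_partitions_mono:
  "P \<in> perfect_partitions q m J \<Longrightarrow> J \<subseteq> I \<Longrightarrow> P \<in> perfect_partitions q m I"
  unfolding perfect_partitions_def codim_partitions_def using cube_partition_mono by blast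

lemma perfect_partitions_fixed_coords:
  "P \<in> perfect_partitions q m J \<Longrightarrow> fixed_coords P \<subseteq> J"
  unfolding perfect_partitions_def codim_partitions_def using fixed_coords_subset by blast

lemma finite_perfect_partitions: "finite I \<Longrightarrow> finite (perfect_partitions q m I)"
  unfolding perfect_partitions_def using finite_codim_partitions by auto

lemma finite_disjoint_perfect_lists: "finite J \<Longrightarrow> finite (disjoint_perfect_lists q m k J)"
proof -
  assume "finite J"
  moreover have "disjoint_perfect_lists q m k J \<subseteq> {Ps. set Ps \<subseteq> perfect_partitions q m J \<and> length Ps = k}"
    unfolding disjoint_perfect_lists_def by (auto simp: in_set_conv_nth)
  ultimately show ?thesis
    using finite_lists_length_eq[OF finite_perfect_partitions] finite_subset by blast
qed

lemma Cons_disjoint_perfect_lists: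
  assumes P: "P \<in> perfect_partitions q m J" and Ps: "Ps \<in> disjoint_perfect_lists q m k (J - fixed_coords P)"
  shows "P # Ps \<in> disjoint_perfect_lists q m (Suc k) J"
proof -
  have len: "length Ps = k" and el: "\<forall>i<k. Ps ! i \<in> perfect_partitions q m (J - fixed_coords P)"
    and disj: "\<forall>i<k. \<forall>j<k. i \<noteq> j \<longrightarrow> fixed_coords (Ps ! i) \<inter> fixed_coords (Ps ! j) = {}"
    using Ps unfolding disjoint_perfect_lists_def by auto
  have el': "(P # Ps) ! i \<in> perfect_partitions q m J" if "i < Suc k" for i
    using P el that perfect_partitions_mono[of _ q m "J - fixed_coords P" J] by (cases i) auto
  have disj0: "fixed_coords P \<inter> fixed_coords (Ps ! j) = {}" if "j < k" for j
    using el that perfect_partitions_fixed_coords by blast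
  have "fixed_coords ((P # Ps) ! i) \<inter> fixed_coords ((P # Ps) ! j) = {}"
    if "i < Suc k" "j < Suc k" "i \<noteq> j" for i j
    using that disj disj0 by (cases i; cases j) auto
  then show ?thesis using len el' unfolding disjoint_perfect_lists_def by simp
qed

lemma card_disjoint_perfect_lists_ge:
  assumes perfect: "\<And>J. finite J \<Longrightarrow> (card J - repunit q m) ^ repunit q m \<le> card (perfect_partitions q m J)"
    and fin: "finite J"
  shows "(card J - k * repunit q m) ^ (k * repunit q m) \<le> card (disjoint_perfect_lists q m k J)"
  using fin
proof (induction k arbitrary: J)
  case 0
  have "disjoint_perfect_lists q m 0 J = {[]}" unfolding disjoint_perfect_lists_def by auto
  then show ?case by simp
next
  case (Suc k)
  define N where "N = repunit q m"
  define S where "S = (SIGMA P:perfect_partitions q m J. disjoint_perfect_lists q m k (J - fixed_coords P))"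
  have "(card J - Suc k * N) ^ N \<le> (card J - N) ^ N" by (intro power_mono) auto
  also have "\<dots> \<le> card (perfect_partitions q m J)" using perfect[OF Suc.prems] unfolding N_def .
  finally have "(card J - Suc k * N) ^ N * (card J - Suc k * N) ^ (k * N)
      \<le> card (perfect_partitions q m J) * (card J - Suc k * N) ^ (k * N)"
    by (rule mult_right_mono) simp
  also have "\<dots> = (\<Sum>P\<in>perfect_partitions q m J. (card J - Suc k * N) ^ (k * N))" by simp
  also have "\<dots> \<le> (\<Sum>P\<in>perfect_partitions q m J. card (disjoint_perfect_lists q m k (J - fixed_coords P)))"
  proof (rule sum_mono)
    fix P assume P: "P \<in> perfect_partitions q m J"
    have "card (J - fixed_coords P) = card J - N"
      using P perfect_partitions_fixed_coords[OF P] Suc.prems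
      unfolding perfect_partitions_def N_def by (simp add: card_Diff_subset finite_subset)
    then show "(card J - Suc k * N) ^ (k * N) \<le> card (disjoint_perfect_lists q m k (J - fixed_coords P))"
      using Suc.IH[of "J - fixed_coords P"] Suc.prems unfolding N_def by (simp add: diff_diff_left)
  qed
  also have "\<dots> = card S"
    unfolding S_def using finite_perfect_partitions[OF Suc.prems] finite_disjoint_perfect_lists Suc.prems
    by (simp add: card_SigmaI)
  also have "\<dots> = card ((\<lambda>(P, Ps). P # Ps) ` S)" by (rule card_image[symmetric]) (auto intro: inj_onI)
  also have "\<dots> \<le> card (disjoint_perfect_lists q m (Suc k) J)"
    using Cons_disjoint_perfect_lists finite_disjoint_perfect_lists[OF Suc.prems]
    by (intro card_mono) (auto simp: S_def)
  finally show ?case unfolding N_def by (simp add: power_add[symmetric])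
qed

context
  fixes q m :: nat and I :: "nat set" and t :: nat and Ps :: "(nat \<rightharpoonup> nat) set list"
  assumes two_le_q: "2 \<le> q" and finite_I: "finite I" and t: "t \<in> I"
    and Ps: "Ps \<in> disjoint_perfect_lists q m q (I - {t})"
begin

lemma stack_parts:
  "\<And>a. a < q \<Longrightarrow> Ps ! a \<in> perfect_partitions q m (I - {t})"
  "\<And>a b. a < q \<Longrightarrow> b < q \<Longrightarrow> a \<noteq> b \<Longrightarrow> fixed_coords (Ps ! a) \<inter> fixed_coords (Ps ! b) = {}"
  using Ps unfolding disjoint_perfect_lists_def by auto

lemma stack_parts_partition: "a < q \<Longrightarrow> cube_partition q (I - {t}) (Ps ! a)"
  using stack_parts(1) unfolding perfect_partitions_def codim_partitions_def by auto

lemma stack_parts_free: "a < q \<Longrightarrow> c \<in> Ps ! a \<Longrightarrow> t \<notin> dom c"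
  using cube_partition_cube[OF stack_parts_partition] unfolding is_cube_def by blast

lemma mem_stack: "d \<in> stack q t Ps \<longleftrightarrow> (\<exists>a<q. \<exists>c\<in>Ps ! a. d = c(t \<mapsto> a))"
  unfolding stack_def by auto

lemma stack_partition: "cube_partition q I (stack q t Ps)"
  unfolding cube_partition_def
proof (intro conjI ballI)
  fix d assume "d \<in> stack q t Ps"
  then obtain a c where "a < q" "c \<in> Ps ! a" "d = c(t \<mapsto> a)" using mem_stack by blast
  then show "is_cube q I d"
    using cube_partition_cube[OF stack_parts_partition] t unfolding is_cube_def by auto
next
  fix x assume x: "x \<in> grid q I"
  define x' where "x' = x(t := undefined)"
  have a: "x t < q" using x t unfolding grid_def by auto
  have x': "x' \<in> grid q (I - {t})" using x unfolding grid_def x'_def by (auto simp: PiE_def extensional_def)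
  have matches_iff: "matches x (c(t \<mapsto> b)) \<longleftrightarrow> b = x t \<and> matches x' c"
    if "b < q" "c \<in> Ps ! b" for b c
    using stack_parts_free[OF that] unfolding matches_def x'_def by (auto split: if_splits)
  obtain c where c: "c \<in> Ps ! x t" "matches x' c"
    using cube_partition_cover[OF stack_parts_partition[OF a] x'] by blast
  show "\<exists>!d\<in>stack q t Ps. matches x d"
  proof (rule ex1I[of _ "c(t \<mapsto> x t)"])
    show "c(t \<mapsto> x t) \<in> stack q t Ps \<and> matches x (c(t \<mapsto> x t))"
      using mem_stack a c matches_iff by blast
  next
    fix d assume d: "d \<in> stack q t Ps \<and> matches x d"
    then obtain b c' where b: "b < q" "c' \<in> Ps ! b" "d = c'(t \<mapsto> b)" using mem_stack by blast
    then have "b = x t" "matches x' c'" using d matches_iff by auto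
    then have "c' = c" using cube_partition_unique[OF stack_parts_partition[OF a] x'] b(2) c by blast
    then show "d = c(t \<mapsto> x t)" using b(3) \<open>b = x t\<close> by simp
  qed
qed

lemma stack_codim: "d \<in> stack q t Ps \<Longrightarrow> card (dom d) \<le> Suc m"
proof -
  assume "d \<in> stack q t Ps"
  then obtain a c where ac: "a < q" "c \<in> Ps ! a" "d = c(t \<mapsto> a)" using mem_stack by blast
  have "card (dom c) \<le> m"
    using stack_parts(1)[OF ac(1)] ac(2) unfolding perfect_partitions_def codim_partitions_def by auto
  moreover have "finite (dom c)"
    using cube_partition_cube[OF stack_parts_partition[OF ac(1)] ac(2)] finite_I
    unfolding is_cube_def by (meson finite_Diff finite_subset)
  ultimately show ?thesis using ac(3) stack_parts_free[OF ac(1,2)] by simp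
qed

lemma stack_parts_nonempty: "a < q \<Longrightarrow> Ps ! a \<noteq> {}"
  using cube_partition_nonempty[OF stack_parts_partition] two_le_q by simp

lemma fixed_coords_stack: "fixed_coords (stack q t Ps) = insert t (\<Union>a<q. fixed_coords (Ps ! a))"
proof
  show "fixed_coords (stack q t Ps) \<subseteq> insert t (\<Union>a<q. fixed_coords (Ps ! a))"
    unfolding fixed_coords_def stack_def by auto
  show "insert t (\<Union>a<q. fixed_coords (Ps ! a)) \<subseteq> fixed_coords (stack q t Ps)"
  proof
    fix i assume i: "i \<in> insert t (\<Union>a<q. fixed_coords (Ps ! a))"
    obtain a c where ac: "a < q" "c \<in> Ps ! a" "i = t \<or> i \<in> dom c"
    proof (cases "i = t")
      case True
      obtain c where "c \<in> Ps ! 0" using stack_parts_nonempty two_le_q by fastforce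
      then show ?thesis using that[of 0 c] True two_le_q by simp
    next
      case False
      then show ?thesis using i that unfolding fixed_coords_def by blast
    qed
    then have "c(t \<mapsto> a) \<in> stack q t Ps" "i \<in> dom (c(t \<mapsto> a))" using mem_stack by auto
    then show "i \<in> fixed_coords (stack q t Ps)" unfolding fixed_coords_def by blast
  qed
qed

lemma card_fixed_coords_stack: "card (fixed_coords (stack q t Ps)) = repunit q (Suc m)"
proof -
  have fin: "finite (fixed_coords (Ps ! a))" if "a < q" for a
    using perfect_partitions_fixed_coords[OF stack_parts(1)[OF that]] finite_I by (auto intro: finite_subset)
  have "card (\<Union>a<q. fixed_coords (Ps ! a)) = (\<Sum>a<q. card (fixed_coords (Ps ! a)))"
    using fin stack_parts(2) by (intro card_UN_disjoint) auto
  also have "\<dots> = q * repunit q m"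
    using stack_parts(1) unfolding perfect_partitions_def by simp
  finally have "card (\<Union>a<q. fixed_coords (Ps ! a)) = q * repunit q m" .
  moreover have "t \<notin> (\<Union>a<q. fixed_coords (Ps ! a))"
    using perfect_partitions_fixed_coords[OF stack_parts(1)] by blast
  ultimately show ?thesis unfolding fixed_coords_stack using fin by (simp add: repunit_Suc)
qed

lemma stack_common_coord: "d \<in> stack q t Ps \<Longrightarrow> t \<in> dom d"
  using mem_stack by auto

lemma stack_common_coord_unique:
  assumes common: "\<forall>d\<in>stack q t Ps. s \<in> dom d"
  shows "s = t"
proof (rule ccontr)
  assume st: "s \<noteq> t"
  have "s \<in> fixed_coords (Ps ! a)" if a: "a < q" for a
  proof -
    obtain c where c: "c \<in> Ps ! a" using stack_parts_nonempty[OF a] by blast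
    then have "s \<in> dom (c(t \<mapsto> a))" using common mem_stack a by blast
    then show ?thesis using c st unfolding fixed_coords_def by auto
  qed
  then have "s \<in> fixed_coords (Ps ! 0) \<inter> fixed_coords (Ps ! 1)" using two_le_q by simp
  then show False using stack_parts(2)[of 0 1] two_le_q by auto
qed

lemma slice_stack: "a < q \<Longrightarrow> slice t a (stack q t Ps) = Ps ! a"
proof -
  assume a: "a < q"
  have "{d \<in> stack q t Ps. d t = None \<or> d t = Some a} = (\<lambda>c. c(t \<mapsto> a)) ` (Ps ! a)"
    using mem_stack a by auto
  moreover have "(c(t \<mapsto> a))(t := None) = c" if "c \<in> Ps ! a" for c
    using stack_parts_free[OF a that] by (auto simp: domIff fun_upd_idem)
  ultimately show ?thesis unfolding slice_def by (force simp: image_image)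
qed

lemma stack_perfect: "stack q t Ps \<in> perfect_partitions q (Suc m) I"
  using stack_partition stack_codim card_fixed_coords_stack
  unfolding perfect_partitions_def codim_partitions_def by auto

end

lemma inj_on_stack:
  assumes q: "2 \<le> q" and fin: "finite I"
  shows "inj_on (\<lambda>(t, Ps). stack q t Ps) (SIGMA t:I. disjoint_perfect_lists q m q (I - {t}))"
proof (rule inj_onI)
  fix x x' assume x: "x \<in> (SIGMA t:I. disjoint_perfect_lists q m q (I - {t}))"
    and x': "x' \<in> (SIGMA t:I. disjoint_perfect_lists q m q (I - {t}))"
    and eq: "(\<lambda>(t, Ps). stack q t Ps) x = (\<lambda>(t, Ps). stack q t Ps) x'"
  obtain t Ps t' Ps' where pairs: "x = (t, Ps)" "x' = (t', Ps')" by fastforce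
  then have t: "t \<in> I" "Ps \<in> disjoint_perfect_lists q m q (I - {t})"
    and t': "t' \<in> I" "Ps' \<in> disjoint_perfect_lists q m q (I - {t'})"
    and eq': "stack q t Ps = stack q t' Ps'"
    using x x' eq by auto
  have "t' = t" using stack_common_coord_unique[OF q fin t] stack_common_coord[OF q fin t'] eq' by simp
  then have "Ps ! a = Ps' ! a" if "a < q" for a
    using slice_stack[OF q fin t that] slice_stack[OF q fin t' that] eq' by simp
  moreover have "length Ps = q" "length Ps' = q"
    using t(2) t'(2) unfolding disjoint_perfect_lists_def by auto
  ultimately show "x = x'" using \<open>t' = t\<close> pairs by (simp add: nth_equalityI)
qed

theorem card_perfect_partitions_ge:
  assumes q: "2 \<le> q"
  shows "finite I \<Longrightarrow> (card I - repunit q m) ^ repunit q m \<le> card (perfect_partitions q m I)"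
proof (induction m arbitrary: I)
  case 0
  have "cube_partition q I {Map.empty}" unfolding cube_partition_def is_cube_def matches_def by auto
  then have "{Map.empty} \<in> perfect_partitions q 0 I"
    unfolding perfect_partitions_def codim_partitions_def repunit_def fixed_coords_def by auto
  then have "1 \<le> card (perfect_partitions q 0 I)"
    using finite_perfect_partitions[OF 0] by (simp add: Suc_le_eq card_gt_0_iff) blast
  then show ?case by (simp add: repunit_def)
next
  case (Suc m)
  define n where "n = card I"
  define K where "K = q * repunit q m"
  define T where "T = (SIGMA t:I. disjoint_perfect_lists q m q (I - {t}))"
  have repunit: "repunit q (Suc m) = K + 1" unfolding K_def repunit_Suc by simp
  note inj_on_stack[OF q Suc.prems, of m, folded T_def]
  moreover have "(\<lambda>(t, Ps). stack q t Ps) ` T \<subseteq> perfect_partitions q (Suc m) I"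
    using stack_perfect[OF q Suc.prems] unfolding T_def by auto
  ultimately have "card T \<le> card (perfect_partitions q (Suc m) I)"
    by (rule card_inj_on_le[OF _ _ finite_perfect_partitions[OF Suc.prems]])
  moreover have "(n - repunit q (Suc m)) ^ repunit q (Suc m) \<le> card T"
  proof -
    have "(n - repunit q (Suc m)) ^ repunit q (Suc m) \<le> n * (n - repunit q (Suc m)) ^ K"
      unfolding repunit by (simp add: mult_right_mono)
    also have "\<dots> = (\<Sum>t\<in>I. (n - repunit q (Suc m)) ^ K)" unfolding n_def by simp
    also have "\<dots> \<le> (\<Sum>t\<in>I. card (disjoint_perfect_lists q m q (I - {t})))"
    proof (rule sum_mono)
      fix t assume "t \<in> I"
      then have "card (I - {t}) - q * repunit q m = n - repunit q (Suc m)"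
        using Suc.prems unfolding n_def repunit K_def by simp
      then show "(n - repunit q (Suc m)) ^ K \<le> card (disjoint_perfect_lists q m q (I - {t}))"
        using card_disjoint_perfect_lists_ge[OF Suc.IH, of "I - {t}" q] Suc.prems
        unfolding K_def by simp
    qed
    also have "\<dots> = card T"
      unfolding T_def using Suc.prems finite_disjoint_perfect_lists by (simp add: card_SigmaI)
    finally show ?thesis .
  qed
  ultimately show ?case unfolding n_def by simp
qed


section \<open>Subcube partitions of the hypercube\<close>

lemma hcube_eq_grid: "hcube q n = grid q {..<n}"
  unfolding hcube_def grid_def ..

lemma dom_restrict_Some: "dom ((Some \<circ> f) |` S) = S"
  by (auto simp: restrict_map_def dom_def)

lemma subcube_fix_eq_cube_points: "subcube_fix q n S f = cube_points q {..<n} ((Some \<circ> f) |` S)"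
  unfolding subcube_fix_def cube_points_def hcube_eq_grid matches_def dom_restrict_Some
  by (auto simp: restrict_map_def)

lemma cube_points_inj:
  assumes "2 \<le> q" and "is_cube q I c" and "is_cube q I d" and "cube_points q I c = cube_points q I d"
  shows "c = d"
  using map_le_if_cube_points_subset[OF assms(2,3,1)] map_le_if_cube_points_subset[OF assms(3,2,1)]
    assms(4) map_le_antisym unfolding cube_points_def by blast

lemma subcube_dim_ge_iff:
  "subcube_dim_ge q n (n - m) C \<longleftrightarrow>
    (\<exists>c. is_cube q {..<n} c \<and> card (dom c) \<le> m \<and> C = cube_points q {..<n} c)"
proof
  assume "subcube_dim_ge q n (n - m) C"
  then obtain S f where S: "S \<subseteq> {..<n}" "\<forall>i\<in>S. f i < q" "n - m \<le> n - card S"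
    and C: "C = subcube_fix q n S f"
    unfolding subcube_dim_ge_def by blast
  have "card S \<le> n" using S(1) by (metis card_lessThan card_mono finite_lessThan)
  then have "card S \<le> m" using S(3) by linarith
  moreover have "is_cube q {..<n} ((Some \<circ> f) |` S)"
    using S(1,2) unfolding is_cube_def dom_restrict_Some by simp
  ultimately show "\<exists>c. is_cube q {..<n} c \<and> card (dom c) \<le> m \<and> C = cube_points q {..<n} c"
    unfolding C subcube_fix_eq_cube_points by (intro exI[of _ "(Some \<circ> f) |` S"])
      (simp add: dom_restrict_Some del: dom_restrict)
next
  assume "\<exists>c. is_cube q {..<n} c \<and> card (dom c) \<le> m \<and> C = cube_points q {..<n} c"
  then obtain c where c: "is_cube q {..<n} c" "card (dom c) \<le> m" "C = cube_points q {..<n} c" by blast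
  have "(Some \<circ> (\<lambda>i. the (c i))) |` dom c = c"
    by (rule ext) (simp add: restrict_map_def domIff option.collapse)
  then have "C = subcube_fix q n (dom c) (\<lambda>i. the (c i))"
    unfolding subcube_fix_eq_cube_points c(3) by simp
  then show "subcube_dim_ge q n (n - m) C"
    using c(1,2) unfolding subcube_dim_ge_def is_cube_def
    by (intro exI[of _ "dom c"] exI[of _ "\<lambda>i. the (c i)"]) (auto simp: diff_le_mono2)
qed

lemma subcube_partition_image:
  assumes "P \<in> codim_partitions q m {..<n}"
  shows "subcube_partition q n (n - m) (cube_points q {..<n} ` P)"
proof -
  have P: "cube_partition q {..<n} P" "\<forall>c\<in>P. card (dom c) \<le> m"
    using assms unfolding codim_partitions_def by auto
  have "subcube_dim_ge q n (n - m) C" if "C \<in> cube_points q {..<n} ` P" for C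
    using that P cube_partition_cube unfolding subcube_dim_ge_iff by blast
  moreover have "\<exists>!C\<in>cube_points q {..<n} ` P. x \<in> C" if "x \<in> hcube q n" for x
  proof -
    have x: "x \<in> grid q {..<n}" using that unfolding hcube_eq_grid .
    obtain c where "c \<in> P" "matches x c" using cube_partition_cover[OF P(1) x] by blast
    moreover have "d = c" if "d \<in> P" "matches x d" "matches x c" "c \<in> P" for d
      using cube_partition_unique[OF P(1) x] that by blast
    ultimately show ?thesis unfolding cube_points_def using x by blast
  qed
  ultimately show ?thesis unfolding subcube_partition_def by simp
qed

lemma subcube_partition_preimage:
  assumes q: "2 \<le> q" and "subcube_partition q n (n - m) \<P>"
  shows "\<P> \<in> (\<lambda>P. cube_points q {..<n} ` P) ` codim_partitions q m {..<n}"
proof -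
  have cubes: "\<forall>C\<in>\<P>. subcube_dim_ge q n (n - m) C" and cover: "\<forall>x\<in>hcube q n. \<exists>!C\<in>\<P>. x \<in> C"
    using assms(2) unfolding subcube_partition_def by auto
  define P where "P = {c. is_cube q {..<n} c \<and> card (dom c) \<le> m \<and> cube_points q {..<n} c \<in> \<P>}"
  have image: "cube_points q {..<n} ` P = \<P>"
    using cubes unfolding P_def subcube_dim_ge_iff by auto
  have "cube_partition q {..<n} P"
    unfolding cube_partition_def
  proof (intro conjI ballI)
    show "is_cube q {..<n} c" if "c \<in> P" for c using that unfolding P_def by simp
  next
    fix x assume x: "x \<in> grid q {..<n}"
    have "c = d" if cd: "c \<in> P" "d \<in> P" "matches x c" "matches x d" for c d
    proof -
      have "x \<in> cube_points q {..<n} c" "x \<in> cube_points q {..<n} d"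
        using cd x unfolding cube_points_def by auto
      moreover have "cube_points q {..<n} c \<in> \<P>" "cube_points q {..<n} d \<in> \<P>"
        using cd unfolding P_def by auto
      ultimately have "cube_points q {..<n} c = cube_points q {..<n} d"
        using cover x unfolding hcube_eq_grid by blast
      then show ?thesis using cube_points_inj[OF q] cd unfolding P_def by blast
    qed
    moreover have "\<exists>c\<in>P. matches x c"
      using x cover image unfolding hcube_eq_grid cube_points_def by blast
    ultimately show "\<exists>!c\<in>P. matches x c" by blast
  qed
  then have "P \<in> codim_partitions q m {..<n}" unfolding codim_partitions_def P_def by auto
  with image show ?thesis by blast
qed

lemma subcube_partitions_eq_image:
  "2 \<le> q \<Longrightarrow>
    {P. subcube_partition q n (n - m) P} = (\<lambda>P. cube_points q {..<n} ` P) ` codim_partitions q m {..<n}"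
  using subcube_partition_image subcube_partition_preimage by blast

lemma card_subcube_partitions:
  assumes q: "2 \<le> q"
  shows "card {P. subcube_partition q n (n - m) P} = card (codim_partitions q m {..<n})"
  unfolding subcube_partitions_eq_image[OF q]
proof (rule card_image, rule inj_onI)
  fix P P' assume "P \<in> codim_partitions q m {..<n}" "P' \<in> codim_partitions q m {..<n}"
    and eq: "cube_points q {..<n} ` P = cube_points q {..<n} ` P'"
  then have "P \<subseteq> cubes q {..<n}" "P' \<subseteq> cubes q {..<n}"
    unfolding codim_partitions_def using cube_partition_subset_cubes by auto
  moreover have "inj_on (cube_points q {..<n}) (cubes q {..<n})"
    using cube_points_inj[OF q] unfolding cubes_def by (intro inj_onI) auto
  ultimately show "P = P'" using eq inj_on_image_eq_iff by (metis subset_antisym subset_image_iff)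
qed

lemma asymp_equiv_real_plus_const: "(\<lambda>n::nat. real n + c) \<sim>[at_top] (\<lambda>n. real n)"
proof (rule asymp_equivI')
  have "((\<lambda>n::nat. 1 + c / real n) \<longlongrightarrow> 1 + 0) at_top"
    by (intro tendsto_add tendsto_const lim_const_over_n)
  moreover have "eventually (\<lambda>n::nat. 1 + c / real n = (real n + c) / real n) at_top"
    using eventually_gt_at_top[of 0] by eventually_elim (simp add: field_simps)
  ultimately show "((\<lambda>n. (real n + c) / real n) \<longlongrightarrow> 1) at_top"
    by (simp add: Lim_transform_eventually)
qed

lemma asymp_equiv_power_sandwich:
  fixes a :: "nat \<Rightarrow> nat"
  assumes lower: "\<And>n. (n - N) ^ k \<le> a n" and upper: "\<And>n. a n \<le> (n + C) ^ k"
  shows "(\<lambda>n. real (a n)) \<sim>[at_top] (\<lambda>n. real n ^ k)"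
proof -
  have lower_equiv: "(\<lambda>n. (real n - real N) ^ k) \<sim>[at_top] (\<lambda>n. real n ^ k)"
    using asymp_equiv_power[OF asymp_equiv_real_plus_const[of "- real N"]] by simp
  have upper_equiv: "(\<lambda>n. (real n + real C) ^ k) \<sim>[at_top] (\<lambda>n. real n ^ k)"
    by (intro asymp_equiv_power asymp_equiv_real_plus_const)
  have "eventually (\<lambda>n. (real n - real N) ^ k \<le> real (a n)) at_top"
    using eventually_ge_at_top[of N]
  proof eventually_elim
    case (elim n)
    then have "(real n - real N) ^ k = real ((n - N) ^ k)" by (simp add: of_nat_diff)
    then show ?case using lower[of n] by (simp only: of_nat_le_iff)
  qed
  moreover have "eventually (\<lambda>n. real (a n) \<le> (real n + real C) ^ k) at_top"
    using upper by (intro always_eventually allI) (metis of_nat_add of_nat_le_iff of_nat_power)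
  moreover have "eventually (\<lambda>n. 0 \<le> (real n - real N) ^ k) at_top"
    using eventually_ge_at_top[of N] by eventually_elim simp
  ultimately show ?thesis
    using asymp_equiv_sandwich(1)[of "\<lambda>n. (real n - real N) ^ k" at_top "\<lambda>n. real (a n)"
        "\<lambda>n. (real n + real C) ^ k"] lower_equiv upper_equiv
    by (meson asymp_equiv_symI asymp_equiv_trans)
qed

corollary card_codim_partitions_ge:
  assumes "2 \<le> q" and "finite I"
  shows "(card I - repunit q m) ^ repunit q m \<le> card (codim_partitions q m I)"
proof -
  have "perfect_partitions q m I \<subseteq> codim_partitions q m I" unfolding perfect_partitions_def by auto
  then have "card (perfect_partitions q m I) \<le> card (codim_partitions q m I)"
    using card_mono[OF finite_codim_partitions[OF assms(2)]] by blast
  with card_perfect_partitions_ge[OF assms, where m = m] show ?thesis by linarith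
qed

lemma real_repunit: "2 \<le> q \<Longrightarrow> real (repunit q m) = (real q ^ m - 1) / (real q - 1)"
proof -
  assume q: "2 \<le> q"
  have "real q ^ m = 1 + (real q - 1) * real (repunit q m)"
    using arg_cong[OF repunit_eq[of q m], of real] q by (simp add: of_nat_diff)
  then show ?thesis using q by simp
qed

theorem corollary3:
  fixes q m :: nat
  assumes "q \<ge> 2" and "m \<ge> 1"
  shows "(\<lambda>n. real (card {P. subcube_partition q n (n - m) P}))
           \<sim>[at_top] (\<lambda>n. real n powr ((real q ^ m - 1) / (real q - 1)))"
proof -
  define N where "N = repunit q m"
  obtain C where "\<And>I. finite I \<Longrightarrow> card (codim_partitions q m I) \<le> (card I + C) ^ N"
    using card_codim_partitions_le[OF assms(1)] unfolding N_def by blast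
  then have upper: "card (codim_partitions q m {..<n}) \<le> (n + C) ^ N" for n
    by (metis card_lessThan finite_lessThan)
  have lower: "(n - N) ^ N \<le> card (codim_partitions q m {..<n})" for n
    using card_codim_partitions_ge[OF assms(1), of "{..<n}" m] unfolding N_def by simp
  have equiv: "(\<lambda>n. real (card (codim_partitions q m {..<n}))) \<sim>[at_top] (\<lambda>n. real n ^ N)"
    by (rule asymp_equiv_power_sandwich[OF lower upper])
  have powr: "eventually (\<lambda>n. real n ^ N = real n powr ((real q ^ m - 1) / (real q - 1))) at_top"
    using eventually_gt_at_top[of 0] by eventually_elim (simp add: N_def real_repunit[OF assms(1), symmetric] powr_realpow)
  show ?thesis
    unfolding card_subcube_partitions[OF assms(1)] using asymp_equiv_transfer[OF equiv _ powr] by simp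
qed

end
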